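(* Let $S$ be a positive martingale with $S_0=1$ modelling a risky asset, and for $t>0$, $k\in\mathbb R$ let $C(t,k)=\mathbb E[(S_t-e^k)^+]$ and $P(t,k)=\mathbb E[(e^k-S_t)^+]$. Fix $\theta\in\mathbb R\setminus\{0\}$ and set $k_t=\theta\left(t\log\frac1t\right)^{1/2}$. Let $\widehat C_t$ and $\widehat P_t$ be deterministic functions with $C(t,k_t)\sim\widehat C_t$ and $P(t,k_t)\sim\widehat P_t$ as $t\downarrow0$, and define $\widehat I_t(\theta)=\widehat C_t1_{\{\theta>0\}}+\widehat P_t1_{\{\theta<0\}}$ and $I_t(\theta)=C(t,k_t)1_{\{\theta>0\}}+P(t,k_t)1_{\{\theta<0\}}$. Assume $$\frac12<\liminf_{t\downarrow0}\frac{\log I_t(\theta)}{\log t}\le\limsup_{t\downarrow0}\frac{\log I_t(\theta)}{\log t}<\infty.$$ For $x,t>0$ let $J_t(x)=\frac{\log x}{\log t}-\frac{\log\log\frac1t}{\log\frac1t}$, and put $L_t(\theta)=J_t(I_t(\theta))$, $\widehat L_t(\theta)=J_t(\widehat I_t(\theta))$. Then the implied volatility $\sigma_t(\theta):=\widehat\sigma(t,k_t)$ satisfies, as $t\downarrow0$, $$\sigma_t(\theta)=\frac{|\theta|}{\sqrt{2L_t(\theta)-1}}+\frac{|\theta|\log\frac{(2L_t(\theta)-1)^{3/2}\sqrt{2\pi}}{|\theta|}}{(2L_t(\theta)-1)^{3/2}}\frac{1}{\log\frac1t}+O\!\left(\frac{1}{\log^2\frac1t}\right),$$ and $$\sigma_t(\theta)=\frac{|\theta|}{\sqrt{2\widehat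 L_t(\theta)-1}}+\frac{|\theta|\log\frac{(2\widehat L_t(\theta)-1)^{3/2}\sqrt{2\pi}}{|\theta|}}{(2\widehat L_t(\theta)-1)^{3/2}}\frac{1}{\log\frac1t}+o\!\left(\frac{1}{\log\frac1t}\right).$$
   Context: Black–Scholes call price: $C^{\mathrm{BS}}(t,k,\sigma)=N(d_+)-e^kN(d_-)$ with $d_\pm=-\frac{k}{\sigma\sqrt t}\pm\frac{\sigma\sqrt t}{2}$, $N$ the standard normal CDF. The implied volatility $\widehat\sigma(t,k)$ is the unique $\sigma>0$ with $C^{\mathrm{BS}}(t,k,\sigma)=C(t,k)$ (equivalently, by put–call parity, matching the Black–Scholes put price $e^kN(-d_+)-N(-d_-)$ to $P(t,k)$). Notation: $f\sim g$ means $f/g\to1$; $f=o(g)$ means $f/g\to0$; $f=O(g)$ means $f/g$ bounded for small $t>0$; all as $t\downarrow0$. *)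

theory Defs
  imports "HOL-Probability.Probability" "HOL-Library.Landau_Symbols"
begin

definition martingale :: "'a measure \<Rightarrow> (real \<Rightarrow> 'a measure) \<Rightarrow> (real \<Rightarrow> 'a \<Rightarrow> real) \<Rightarrow> bool" where
  "martingale M F S \<longleftrightarrow>
     prob_space M \<and>
     (\<forall>t\<ge>0. subalgebra M (F t)) \<and>
     (\<forall>s t. 0 \<le> s \<longrightarrow> s \<le> t \<longrightarrow> sets (F s) \<subseteq> sets (F t)) \<and>
     (\<forall>t\<ge>0. S t \<in> borel_measurable (F t)) \<and>
     (\<forall>t\<ge>0. integrable M (S t)) \<and>
     (\<forall>s t. 0 \<le> s \<longrightarrow> s \<le> t \<longrightarrow> (AE \<omega> in M. real_cond_exp M (F s) (S t) \<omega> = S s \<omega>))"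

definition call_price :: "'a measure \<Rightarrow> (real \<Rightarrow> 'a \<Rightarrow> real) \<Rightarrow> real \<Rightarrow> real \<Rightarrow> real" where
  "call_price M S t k = (\<integral>\<omega>. max (S t \<omega> - exp k) 0 \<partial>M)"

definition put_price :: "'a measure \<Rightarrow> (real \<Rightarrow> 'a \<Rightarrow> real) \<Rightarrow> real \<Rightarrow> real \<Rightarrow> real" where
  "put_price M S t k = (\<integral>\<omega>. max (exp k - S t \<omega>) 0 \<partial>M)"

definition Ncdf :: "real \<Rightarrow> real" where
  "Ncdf x = (LINT y:{..x}|lborel. std_normal_density y)"

definition d_plus :: "real \<Rightarrow> real \<Rightarrow> real \<Rightarrow> real" where
  "d_plus t k \<sigma> = - k / (\<sigma> * sqrt t) + \<sigma> * sqrt t / 2"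

definition d_minus :: "real \<Rightarrow> real \<Rightarrow> real \<Rightarrow> real" where
  "d_minus t k \<sigma> = - k / (\<sigma> * sqrt t) - \<sigma> * sqrt t / 2"

definition BS_call :: "real \<Rightarrow> real \<Rightarrow> real \<Rightarrow> real" where
  "BS_call t k \<sigma> = Ncdf (d_plus t k \<sigma>) - exp k * Ncdf (d_minus t k \<sigma>)"

definition implied_vol :: "real \<Rightarrow> real \<Rightarrow> real \<Rightarrow> real" where
  "implied_vol t k C = (THE \<sigma>. \<sigma> > 0 \<and> BS_call t k \<sigma> = C)"

definition J_fun :: "real \<Rightarrow> real \<Rightarrow> real" where
  "J_fun t x = ln x / ln t - ln (ln (1 / t)) / ln (1 / t)"

end

theory Submission
  imports Defs "HOL-Real_Asymp.Real_Asymp"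
begin

text \<open>
  Write v = \<sigma>\<surd>t for the total volatility and Q(k,v) = BS(k,v) - max(1 - e^k, 0) for the time value of
  the Black-Scholes call; by put-call parity Q(k_t, \<sigma>_t(\<theta>)\<surd>t) = I_t(\<theta>). Comparing derivatives in v
  gives the Gaussian tail bounds e^(-v^2/8) (1 - 3v^2/k^2) H(k,v) \<le> Q(k,v) \<le> H(k,v), where
  H(k,v) = e^(k/2) v^3 e^(-k^2/(2v^2)) / (k^2 \<surd>(2\<pi>)). With k = \<theta>\<surd>(t\<tau>), \<tau> = log(1/t) and v = s\<surd>t, taking
  logarithms turns Q(k,v) = I into the fixed point equation
    \<theta>^2/s^2 = D + (2/\<tau>) (log(s^3/(\<theta>^2\<surd>(2\<pi>))) + R),   D = 2L_t(\<theta>) - 1,  R = O(1/\<tau>),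
  and inverting it to first order gives the expansion with error O(1/\<tau>^2). Replacing I by an
  asymptotically equivalent Ihat moves D only by (2/\<tau>) log(I/Ihat) = o(1/\<tau>).
\<close>

section \<open>Call and put prices of a positive martingale\<close>

lemma martingale_integral_eq_one:
  assumes mart: "martingale M F S" and init: "\<And>\<omega>. \<omega> \<in> space M \<Longrightarrow> S 0 \<omega> = 1" and t: "t \<ge> 0"
  shows "(\<integral>\<omega>. S t \<omega> \<partial>M) = 1"
proof -
  have ps: "prob_space M" and sub: "subalgebra M (F 0)" and int: "integrable M (S t)"
    and ae: "AE \<omega> in M. real_cond_exp M (F 0) (S t) \<omega> = S 0 \<omega>"
    using mart t unfolding martingale_def by auto
  interpret prob_space M by (fact ps)
  interpret finite_measure_subalgebra M "F 0" by unfold_locales (fact sub)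
  have "(\<integral>\<omega>. S t \<omega> \<partial>M) = (\<integral>\<omega>. real_cond_exp M (F 0) (S t) \<omega> \<partial>M)"
    using real_cond_exp_int(2)[OF int] by simp
  also have "\<dots> = (\<integral>\<omega>. 1 \<partial>M)"
    by (rule integral_cong_AE) (use ae init in \<open>auto intro!: borel_measurable_integrable real_cond_exp_int(1)[OF int]\<close>)
  also have "\<dots> = 1" by (simp add: prob_space)
  finally show ?thesis .
qed

lemma martingale_call_put_prices:
  assumes mart: "martingale M F S" and pos: "\<And>t \<omega>. t \<ge> 0 \<Longrightarrow> \<omega> \<in> space M \<Longrightarrow> S t \<omega> > 0"
    and init: "\<And>\<omega>. \<omega> \<in> space M \<Longrightarrow> S 0 \<omega> = 1" and t: "t \<ge> 0"
  shows "call_price M S t k - put_price M S t k = 1 - exp k"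
    and "0 \<le> call_price M S t k" "call_price M S t k < 1"
    and "0 \<le> put_price M S t k" "put_price M S t k < exp k"
proof -
  interpret prob_space M using mart unfolding martingale_def by auto
  have int: "integrable M (S t)" using mart t unfolding martingale_def by auto
  have E: "(\<integral>\<omega>. S t \<omega> \<partial>M) = 1" by (rule martingale_integral_eq_one[OF mart init t])
  have ic: "integrable M (\<lambda>\<omega>. max (S t \<omega> - exp k) 0)"
    by (intro integrable_max Bochner_Integration.integrable_diff int integrable_const)
  have ip: "integrable M (\<lambda>\<omega>. max (exp k - S t \<omega>) 0)"
    by (intro integrable_max Bochner_Integration.integrable_diff int integrable_const)
  have "call_price M S t k - put_price M S t k = (\<integral>\<omega>. max (S t \<omega> - exp k) 0 - max (exp k - S t \<omega>) 0 \<partial>M)"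
    unfolding call_price_def put_price_def by (rule Bochner_Integration.integral_diff[symmetric, OF ic ip])
  also have "\<dots> = (\<integral>\<omega>. S t \<omega> - exp k \<partial>M)"
    by (rule Bochner_Integration.integral_cong) auto
  also have "\<dots> = 1 - exp k" using E int by (simp add: prob_space)
  finally show "call_price M S t k - put_price M S t k = 1 - exp k" .
  have "call_price M S t k < (\<integral>\<omega>. S t \<omega> \<partial>M)" unfolding call_price_def
    by (rule integral_less_AE_space[OF ic int]) (use pos t in \<open>auto simp: emeasure_space_1\<close>)
  then show "call_price M S t k < 1" using E by simp
  have "put_price M S t k < (\<integral>\<omega>. exp k \<partial>M)" unfolding put_price_def
    by (rule integral_less_AE_space[OF ip]) (use pos t in \<open>auto simp: emeasure_space_1\<close>)
  then show "put_price M S t k < exp k" by (simp add: prob_space)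
  show "0 \<le> call_price M S t k" "0 \<le> put_price M S t k"
    unfolding call_price_def put_price_def by (auto intro!: integral_nonneg_AE)
qed

section \<open>The standard normal distribution function\<close>

lemma set_integrable_std_normal_density: "A \<in> sets borel \<Longrightarrow> set_integrable lborel A std_normal_density"
  unfolding set_integrable_def by (rule integrable_mult_indicator) auto

lemma continuous_on_std_normal_density: "continuous_on A std_normal_density"
  unfolding std_normal_density_def by (intro continuous_intros) auto

lemma Ncdf_eq_interval_integral: "Ncdf x = (LBINT y=-\<infinity>..ereal x. std_normal_density y)"
proof -
  have "(LBINT y=-\<infinity>..ereal x. std_normal_density y) =
        (LBINT y : {y. -\<infinity> \<le> ereal y \<and> ereal y \<le> ereal x}. std_normal_density y)"
    by (rule interval_integral_Icc') simp
  also have "{y. -\<infinity> \<le> ereal y \<and> ereal y \<le> ereal x} = {..x}" by auto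
  finally show ?thesis unfolding Ncdf_def by simp
qed

lemma Ncdf_eq_Ncdf_0_plus: "Ncdf x = Ncdf 0 + (LBINT y=ereal 0..ereal x. std_normal_density y)"
proof -
  have "(LBINT y=-\<infinity>..ereal 0. std_normal_density y) + (LBINT y=ereal 0..ereal x. std_normal_density y)
      = (LBINT y=-\<infinity>..ereal x. std_normal_density y)"
    by (rule interval_integral_sum)
      (simp add: interval_lebesgue_integrable_def set_integrable_std_normal_density)
  then show ?thesis unfolding Ncdf_eq_interval_integral by simp
qed

lemma Ncdf_has_real_derivative: "(Ncdf has_real_derivative std_normal_density x) (at x)"
proof -
  let ?F = "\<lambda>u. LBINT y=ereal 0..ereal u. std_normal_density y"
  have "(?F has_vector_derivative std_normal_density x) (at x within {min 0 x - 1..max 0 x + 1})"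
    by (rule interval_integral_FTC2) (auto intro: continuous_on_std_normal_density)
  then have "(?F has_vector_derivative std_normal_density x) (at x)"
    by (subst (asm) at_within_interior) auto
  then have "((\<lambda>u. Ncdf 0 + ?F u) has_real_derivative std_normal_density x) (at x)"
    unfolding has_real_derivative_iff_has_vector_derivative by (auto intro!: derivative_eq_intros)
  then show ?thesis by (simp flip: Ncdf_eq_Ncdf_0_plus)
qed

lemma Ncdf_has_real_derivative_chain [derivative_intros]:
  "(f has_real_derivative f') (at x within s) \<Longrightarrow>
    ((\<lambda>x. Ncdf (f x)) has_real_derivative std_normal_density (f x) * f') (at x within s)"
  using DERIV_chain2[OF Ncdf_has_real_derivative] .

lemma Ncdf_at_top: "(Ncdf \<longlongrightarrow> 1) at_top"
proof -
  have "((\<lambda>y. \<integral>x. indicator {..y} x *\<^sub>R std_normal_density x \<partial>lborel) \<longlongrightarrow> \<integral>x. std_normal_density x \<partial>lborel) at_top"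
    by (rule tendsto_integral_at_top) auto
  then show ?thesis unfolding Ncdf_def[abs_def] set_lebesgue_integral_def by simp
qed

lemma Ncdf_at_bot: "(Ncdf \<longlongrightarrow> 0) at_bot"
proof -
  have lim: "AE x in lborel. ((\<lambda>y. indicator {..- y} x * std_normal_density x) \<longlongrightarrow> 0) at_top"
  proof (rule AE_I2)
    fix x :: real
    have "eventually (\<lambda>y. - x + 1 \<le> y) at_top" by (rule eventually_ge_at_top)
    then have "eventually (\<lambda>y. indicator {..- y} x * std_normal_density x = 0) at_top"
      by eventually_elim (auto split: split_indicator)
    then show "((\<lambda>y. indicator {..- y} x * std_normal_density x) \<longlongrightarrow> 0) at_top"
      by (rule tendsto_eventually)
  qed
  have bnd: "\<forall>\<^sub>F i in at_top. AE x in lborel. indicator {..- i} x * std_normal_density x \<le> std_normal_density x"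
    by (auto split: split_indicator)
  have "((\<lambda>y. \<integral>x. indicator {..-y} x *\<^sub>R std_normal_density x \<partial>lborel) \<longlongrightarrow> \<integral>x. 0 \<partial>lborel) at_top"
    using integral_dominated_convergence_at_top[where w=std_normal_density and f="\<lambda>x. 0::real"
        and s="\<lambda>y x. indicator {..-y} x *\<^sub>R std_normal_density x" and M=lborel] lim bnd
    by simp
  then have "((\<lambda>y. Ncdf (- y)) \<longlongrightarrow> 0) at_top"
    unfolding Ncdf_def set_lebesgue_integral_def by simp
  then show ?thesis by (simp add: filterlim_at_bot_mirror)
qed

section \<open>Black-Scholes prices in total volatility\<close>

definition bs_price :: "real \<Rightarrow> real \<Rightarrow> real" where
  "bs_price k v = Ncdf (- k / v + v / 2) - exp k * Ncdf (- k / v - v / 2)"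

definition bs_time_value :: "real \<Rightarrow> real \<Rightarrow> real" where
  "bs_time_value k v = bs_price k v - max (1 - exp k) 0"

lemma BS_call_eq_bs_price: "BS_call t k \<sigma> = bs_price k (\<sigma> * sqrt t)"
  unfolding BS_call_def bs_price_def d_plus_def d_minus_def by simp

lemma std_normal_density_d_plus:
  assumes "v \<noteq> 0"
  shows "std_normal_density (- k / v + v / 2)
    = 1 / sqrt (2 * pi) * exp (k / 2) * exp (- (k^2) / (2 * v^2)) * exp (- (v^2) / 8)"
proof -
  have "- ((- k / v + v / 2)^2) / 2 = k / 2 + (- (k^2) / (2 * v^2)) + (- (v^2) / 8)"
    using assms by (simp add: field_simps power2_eq_square)
  then show ?thesis unfolding std_normal_density_def by (simp add: exp_add[symmetric] mult.assoc)
qed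

lemma exp_mult_std_normal_density_d_minus:
  assumes "v \<noteq> 0"
  shows "exp k * std_normal_density (- k / v - v / 2) = std_normal_density (- k / v + v / 2)"
proof -
  have "k + - ((- k / v - v / 2)^2) / 2 = - ((- k / v + v / 2)^2) / 2"
    using assms by (simp add: field_simps power2_eq_square)
  then show ?thesis unfolding std_normal_density_def
    by (metis (no_types, lifting) exp_add mult.left_commute)
qed

lemma bs_time_value_has_real_derivative:
  assumes v: "v \<noteq> 0"
  shows "(bs_time_value k has_real_derivative std_normal_density (- k / v + v / 2)) (at v)"
proof -
  have "((\<lambda>v. Ncdf (- k / v + v / 2) - exp k * Ncdf (- k / v - v / 2) - max (1 - exp k) 0)
      has_real_derivative std_normal_density (- k / v + v / 2) * (k / v^2 + 1/2)
        - exp k * (std_normal_density (- k / v - v / 2) * (k / v^2 - 1/2))) (at v)"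
    using v by (auto intro!: derivative_eq_intros simp: power2_eq_square field_simps)
  moreover have "std_normal_density (- k / v + v / 2) * (k / v^2 + 1/2)
      - exp k * (std_normal_density (- k / v - v / 2) * (k / v^2 - 1/2))
     = std_normal_density (- k / v + v / 2)"
    using exp_mult_std_normal_density_d_minus[OF v, of k] by (simp add: algebra_simps)
  ultimately show ?thesis unfolding bs_time_value_def[abs_def] bs_price_def by simp
qed

lemma bs_time_value_at_right_0:
  assumes "k \<noteq> 0"
  shows "(bs_time_value k \<longlongrightarrow> 0) (at_right 0)"
proof (cases "k > 0")
  case True
  have "filterlim (\<lambda>v. -k/v + v/2) at_bot (at_right 0)" "filterlim (\<lambda>v. -k/v - v/2) at_bot (at_right 0)"
    using True by real_asymp+
  then have "((\<lambda>v. Ncdf (-k/v + v/2) - exp k * Ncdf (-k/v - v/2) - 0) \<longlongrightarrow> 0 - exp k * 0 - 0) (at_right 0)"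
    by (intro tendsto_intros filterlim_compose[OF Ncdf_at_bot])
  then show ?thesis using True unfolding bs_time_value_def[abs_def] bs_price_def by simp
next
  case False
  then have "k < 0" using assms by simp
  then have "filterlim (\<lambda>v. -k/v + v/2) at_top (at_right 0)" "filterlim (\<lambda>v. -k/v - v/2) at_top (at_right 0)"
    by real_asymp+
  then have "((\<lambda>v. Ncdf (-k/v + v/2) - exp k * Ncdf (-k/v - v/2) - (1 - exp k)) \<longlongrightarrow> 1 - exp k * 1 - (1 - exp k))
      (at_right 0)"
    by (intro tendsto_intros filterlim_compose[OF Ncdf_at_top])
  then show ?thesis using \<open>k < 0\<close> unfolding bs_time_value_def[abs_def] bs_price_def by simp
qed

lemma bs_time_value_at_top: "(bs_time_value k \<longlongrightarrow> 1 - max (1 - exp k) 0) at_top"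
proof -
  have 1: "filterlim (\<lambda>v. -k/v + v/2) at_top at_top" by real_asymp
  have 2: "filterlim (\<lambda>v. -k/v - v/2) at_bot at_top" by real_asymp
  have "((\<lambda>v. Ncdf (-k/v + v/2) - exp k * Ncdf (-k/v - v/2) - max (1 - exp k) 0)
      \<longlongrightarrow> 1 - exp k * 0 - max (1 - exp k) 0) at_top"
    by (intro tendsto_intros filterlim_compose[OF Ncdf_at_top 1] filterlim_compose[OF Ncdf_at_bot 2])
  then show ?thesis unfolding bs_time_value_def[abs_def] bs_price_def by simp
qed

lemma bs_time_value_strict_mono:
  assumes "0 < a" "a < b"
  shows "bs_time_value k a < bs_time_value k b"
proof (rule DERIV_pos_imp_increasing[OF assms(2)])
  fix x assume "a \<le> x" "x \<le> b"
  then have "x \<noteq> 0" using assms by simp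
  moreover have "0 < std_normal_density (- k / x + x / 2)" by (simp add: normal_density_pos)
  ultimately show "\<exists>y. (bs_time_value k has_real_derivative y) (at x) \<and> 0 < y"
    using bs_time_value_has_real_derivative by blast
qed

lemma bs_time_value_pos:
  assumes "k \<noteq> 0" "v > 0"
  shows "bs_time_value k v > 0"
proof -
  have "eventually (\<lambda>u. 0 < u \<and> u < v / 2) (at_right 0)"
    using assms(2) by (auto simp: eventually_at_right_field intro!: exI[of _ "v / 2"])
  then have "eventually (\<lambda>u. bs_time_value k u \<le> bs_time_value k (v / 2)) (at_right 0)"
    by eventually_elim (auto intro!: less_imp_le[OF bs_time_value_strict_mono])
  from tendsto_le[OF _ tendsto_const bs_time_value_at_right_0[OF assms(1)] this]
  have "0 \<le> bs_time_value k (v / 2)" by simp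
  also have "\<dots> < bs_time_value k v" using assms(2) by (intro bs_time_value_strict_mono) auto
  finally show ?thesis .
qed

lemma bs_time_value_surj:
  assumes k: "k \<noteq> 0" and y: "0 < y" "y < 1 - max (1 - exp k) 0"
  shows "\<exists>v>0. bs_time_value k v = y"
proof -
  obtain b where b: "b > 0" "\<And>u. u > 0 \<Longrightarrow> u < b \<Longrightarrow> bs_time_value k u < y"
    using order_tendstoD(2)[OF bs_time_value_at_right_0[OF k] y(1)]
    unfolding eventually_at_right_field by auto
  define a where "a = b / 2"
  have a: "a > 0" "bs_time_value k a < y" using b by (auto simp: a_def)
  obtain N where N: "\<And>u. u \<ge> N \<Longrightarrow> y < bs_time_value k u"
    using order_tendstoD(1)[OF bs_time_value_at_top y(2)] unfolding eventually_at_top_linorder by auto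
  define c where "c = max N (a + 1)"
  have c: "a \<le> c" "y < bs_time_value k c" using N by (auto simp: c_def)
  have "continuous_on {a..c} (bs_time_value k)"
    using a(1) by (intro continuous_at_imp_continuous_on ballI DERIV_isCont[OF bs_time_value_has_real_derivative]) auto
  then obtain x where "a \<le> x" "x \<le> c" "bs_time_value k x = y"
    using IVT'[of "bs_time_value k" a y c] a c by auto
  then show ?thesis using a(1) by (intro exI[of _ x]) auto
qed

lemma implied_vol_bs_time_value:
  assumes t: "t > 0" and k: "k \<noteq> 0"
    and C: "0 < C - max (1 - exp k) 0" "C < 1"
  shows "implied_vol t k C > 0" "bs_time_value k (implied_vol t k C * sqrt t) = C - max (1 - exp k) 0"
proof -
  obtain v where v: "v > 0" "bs_time_value k v = C - max (1 - exp k) 0"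
    using bs_time_value_surj[OF k C(1)] C(2) by auto
  define s where "s = v / sqrt t"
  have sv: "s * sqrt t = v" using t by (simp add: s_def)
  have s: "s > 0" "BS_call t k s = C"
    using v t sv by (auto simp: s_def BS_call_eq_bs_price bs_time_value_def)
  have uniq: "s' = s" if "s' > 0" "BS_call t k s' = C" for s'
  proof -
    have q: "bs_time_value k (s' * sqrt t) = bs_time_value k v"
      using that v by (simp add: BS_call_eq_bs_price bs_time_value_def)
    have p: "s' * sqrt t > 0" using that t by simp
    have "s' * sqrt t = v"
    proof (rule ccontr)
      assume "s' * sqrt t \<noteq> v"
      then consider "s' * sqrt t < v" | "v < s' * sqrt t" by linarith
      then show False
        using bs_time_value_strict_mono[OF p, of v k] bs_time_value_strict_mono[OF v(1), of "s' * sqrt t" k] q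
        by cases auto
    qed
    then show ?thesis using t sv by (simp add: s_def field_simps)
  qed
  have "implied_vol t k C = s"
    unfolding implied_vol_def
  proof (rule the_equality)
    show "0 < s \<and> BS_call t k s = C" using s by simp
  qed (use uniq in blast)
  then show "implied_vol t k C > 0" "bs_time_value k (implied_vol t k C * sqrt t) = C - max (1 - exp k) 0"
    using s sv v by auto
qed

section \<open>Gaussian tail bounds for the time value\<close>

lemma nonpos_if_deriv_nonpos_tendsto_0:
  fixes h h' :: "real \<Rightarrow> real"
  assumes v: "v > 0"
    and deriv: "\<And>u. 0 < u \<Longrightarrow> u \<le> v \<Longrightarrow> (h has_real_derivative h' u) (at u) \<and> h' u \<le> 0"
    and lim: "(h \<longlongrightarrow> 0) (at_right 0)"
  shows "h v \<le> 0"
proof -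
  have "eventually (\<lambda>e. 0 < e \<and> e < v) (at_right 0)"
    using v by (auto simp: eventually_at_right_field intro!: exI[of _ v])
  then have "eventually (\<lambda>e. h v \<le> h e) (at_right 0)"
  proof eventually_elim
    case (elim e)
    show ?case
    proof (rule DERIV_nonpos_imp_nonincreasing[of e v h])
      show "e \<le> v" using elim by simp
      fix x assume "e \<le> x" "x \<le> v"
      then show "\<exists>y. (h has_real_derivative y) (at x) \<and> y \<le> 0" using deriv[of x] elim by auto
    qed
  qed
  then show ?thesis by (rule tendsto_le[OF _ lim tendsto_const, rotated]) simp
qed

text \<open>The leading term of the Mills ratio expansion of the time value as v \<rightarrow> 0.\<close>

definition bs_tail :: "real \<Rightarrow> real \<Rightarrow> real" where
  "bs_tail k v = 1 / sqrt (2 * pi) * exp (k / 2) * (v^3 / k^2) * exp (- (k^2) / (2 * v^2))"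

lemma bs_tail_pos: "k \<noteq> 0 \<Longrightarrow> v > 0 \<Longrightarrow> bs_tail k v > 0"
  unfolding bs_tail_def by simp

lemma bs_tail_has_real_derivative:
  assumes "v \<noteq> 0" "k \<noteq> 0"
  shows "(bs_tail k has_real_derivative
    1 / sqrt (2 * pi) * exp (k / 2) * exp (- (k^2) / (2 * v^2)) * (1 + 3 * v^2 / k^2)) (at v)"
proof -
  have "((\<lambda>v. v^3 * exp (- (k^2) / (2 * v^2))) has_real_derivative exp (- (k^2) / (2 * v^2)) * (3 * v^2 + k^2)) (at v)"
    using assms by (auto intro!: derivative_eq_intros simp: field_simps power2_eq_square power3_eq_cube)
  from DERIV_cmult[OF this, of "1 / sqrt (2 * pi) * exp (k / 2) / k^2"]
  show ?thesis using assms by (simp add: bs_tail_def[abs_def] field_simps)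
qed

lemma bs_tail_at_right_0:
  assumes "k \<noteq> 0"
  shows "(bs_tail k \<longlongrightarrow> 0) (at_right 0)"
proof -
  have "((\<lambda>v. v^3 / k^2 * exp (- (k^2) / (2 * v^2))) \<longlongrightarrow> 0) (at_right 0)" using assms by real_asymp
  from tendsto_mult_right_zero[OF this, of "1 / sqrt (2 * pi) * exp (k / 2)"]
  show ?thesis unfolding bs_tail_def[abs_def] by (simp add: mult.assoc)
qed

lemma bs_time_value_le_tail:
  assumes k: "k \<noteq> 0" and v: "v > 0"
  shows "bs_time_value k v \<le> bs_tail k v"
proof -
  let ?c = "1 / sqrt (2 * pi) * exp (k / 2)"
  have "(\<lambda>u. bs_time_value k u - bs_tail k u) v \<le> 0"
  proof (rule nonpos_if_deriv_nonpos_tendsto_0[OF v])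
    fix u :: real assume u: "0 < u" "u \<le> v"
    let ?E = "exp (- (k^2) / (2 * u^2))"
    have "exp (- (u^2) / 8) \<le> 1 + 3 * u^2 / k^2"
      using k by (simp add: order.trans[of _ 1])
    from mult_left_mono[OF this, of "?c * ?E"]
    have "std_normal_density (- k / u + u / 2) \<le> ?c * ?E * (1 + 3 * u^2 / k^2)"
      using std_normal_density_d_plus[of u k] u by simp
    then have "std_normal_density (- k / u + u / 2) - ?c * ?E * (1 + 3 * u^2 / k^2) \<le> 0" by simp
    moreover have "((\<lambda>u. bs_time_value k u - bs_tail k u) has_real_derivative
        std_normal_density (- k / u + u / 2) - ?c * ?E * (1 + 3 * u^2 / k^2)) (at u)"
      using u k by (intro DERIV_diff bs_time_value_has_real_derivative bs_tail_has_real_derivative) auto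
    ultimately show "((\<lambda>u. bs_time_value k u - bs_tail k u) has_real_derivative
        std_normal_density (- k / u + u / 2) - ?c * ?E * (1 + 3 * u^2 / k^2)) (at u) \<and>
      std_normal_density (- k / u + u / 2) - ?c * ?E * (1 + 3 * u^2 / k^2) \<le> 0" by blast
  next
    show "((\<lambda>u. bs_time_value k u - bs_tail k u) \<longlongrightarrow> 0) (at_right 0)"
      using tendsto_diff[OF bs_time_value_at_right_0[OF k] bs_tail_at_right_0[OF k]] by simp
  qed
  then show ?thesis by simp
qed

lemma tail_le_bs_time_value:
  assumes k: "k \<noteq> 0" and v: "v > 0"
  shows "exp (- (v^2) / 8) * (1 - 3 * v^2 / k^2) * bs_tail k v \<le> bs_time_value k v"
proof -
  let ?c = "1 / sqrt (2 * pi) * exp (k / 2)"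
  let ?A = "exp (- (v^2) / 8) * (1 - 3 * v^2 / k^2)"
  have "(\<lambda>u. ?A * bs_tail k u - bs_time_value k u) v \<le> 0"
  proof (rule nonpos_if_deriv_nonpos_tendsto_0[OF v, where h = "\<lambda>u. ?A * bs_tail k u - bs_time_value k u"])
    fix u :: real assume u: "0 < u" "u \<le> v"
    let ?E = "exp (- (k^2) / (2 * u^2))"
    have ab: "3 * u^2 / k^2 \<le> 3 * v^2 / k^2" "0 \<le> 3 * u^2 / k^2 * (3 * v^2 / k^2)"
      using u by (auto intro!: divide_right_mono mult_left_mono power_mono)
    have "(1 - 3 * v^2 / k^2) * (1 + 3 * u^2 / k^2)
        = 1 + (3 * u^2 / k^2 - 3 * v^2 / k^2) - 3 * u^2 / k^2 * (3 * v^2 / k^2)"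
      by (simp add: algebra_simps)
    then have "(1 - 3 * v^2 / k^2) * (1 + 3 * u^2 / k^2) \<le> 1" using ab by linarith
    then have "?A * (1 + 3 * u^2 / k^2) \<le> exp (- (v^2) / 8)"
      using mult_left_mono[of _ 1 "exp (- (v^2) / 8)"] by (simp add: mult.assoc)
    also have "\<dots> \<le> exp (- (u^2) / 8)" using u by (simp add: power_mono)
    finally have "?c * ?E * (?A * (1 + 3 * u^2 / k^2)) \<le> ?c * ?E * exp (- (u^2) / 8)"
      by (intro mult_left_mono) auto
    then have "?A * (?c * ?E * (1 + 3 * u^2 / k^2)) - std_normal_density (- k / u + u / 2) \<le> 0"
      using std_normal_density_d_plus[of u k] u by (simp add: ac_simps)
    moreover have "((\<lambda>u. ?A * bs_tail k u - bs_time_value k u) has_real_derivative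
        ?A * (?c * ?E * (1 + 3 * u^2 / k^2)) - std_normal_density (- k / u + u / 2)) (at u)"
      using u k by (intro DERIV_diff DERIV_cmult bs_time_value_has_real_derivative bs_tail_has_real_derivative) auto
    ultimately show "((\<lambda>u. ?A * bs_tail k u - bs_time_value k u) has_real_derivative
        ?A * (?c * ?E * (1 + 3 * u^2 / k^2)) - std_normal_density (- k / u + u / 2)) (at u) \<and>
      ?A * (?c * ?E * (1 + 3 * u^2 / k^2)) - std_normal_density (- k / u + u / 2) \<le> 0" by blast
  next
    show "((\<lambda>u. ?A * bs_tail k u - bs_time_value k u) \<longlongrightarrow> 0) (at_right 0)"
      using tendsto_diff[OF tendsto_mult_right_zero[OF bs_tail_at_right_0[OF k]] bs_time_value_at_right_0[OF k]]
      by simp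
  qed
  then show ?thesis by simp
qed

lemma ln_bs_time_value_over_tail_bounds:
  assumes k: "k \<noteq> 0" and v: "v > 0" and small: "3 * (v^2 / k^2) \<le> 1 / 2"
  shows "- (v^2 / 8) - 6 * (v^2 / k^2) \<le> ln (bs_time_value k v / bs_tail k v)"
    and "ln (bs_time_value k v / bs_tail k v) \<le> 0"
proof -
  define z where "z = 3 * (v^2 / k^2)"
  have H: "bs_tail k v > 0" and Q: "bs_time_value k v > 0"
    using k v by (simp_all add: bs_tail_pos bs_time_value_pos)
  have z: "0 \<le> z" "z \<le> 1 / 2" using small by (simp_all add: z_def)
  have "exp (- (v^2) / 8) * (1 - z) \<le> bs_time_value k v / bs_tail k v"
    using tail_le_bs_time_value[OF k v] H by (simp add: z_def field_simps)
  then have "ln (exp (- (v^2) / 8) * (1 - z)) \<le> ln (bs_time_value k v / bs_tail k v)"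
    using z by (intro ln_mono) auto
  moreover have "ln (exp (- (v^2) / 8) * (1 - z)) = - (v^2 / 8) + ln (1 - z)"
    using z by (simp add: ln_mult)
  moreover have "- z - 2 * z^2 \<le> ln (1 - z)" by (rule ln_one_minus_pos_lower_bound[OF z])
  moreover have "z * (2 * z) \<le> z * 1" using z by (intro mult_left_mono) auto
  then have "2 * z^2 \<le> z" by (simp add: power2_eq_square)
  ultimately show "- (v^2 / 8) - 6 * (v^2 / k^2) \<le> ln (bs_time_value k v / bs_tail k v)"
    by (simp add: z_def)
  show "ln (bs_time_value k v / bs_tail k v) \<le> 0"
    using bs_time_value_le_tail[OF k v] H Q by simp
qed

section \<open>The small-time fixed point equation\<close>

lemma ln_bs_tail_small_time:
  assumes t: "0 < t" "t < 1" and s: "s > 0" and \<theta>: "\<theta> \<noteq> 0"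
  defines "\<tau> \<equiv> ln (1 / t)"
  defines "k \<equiv> \<theta> * sqrt (t * \<tau>)"
  shows "ln (bs_tail k (s * sqrt t))
    = - \<tau> / 2 - \<theta>^2 * \<tau> / (2 * s^2) - ln \<tau> + ln (s^3 / (\<theta>^2 * sqrt (2 * pi))) + k / 2"
proof -
  have \<tau>: "\<tau> > 0" "ln t = - \<tau>" using t by (simp_all add: \<tau>_def ln_div)
  have k2: "k^2 = \<theta>^2 * t * \<tau>" using t \<tau> by (simp add: k_def power_mult_distrib)
  have v3: "(s * sqrt t)^3 = s^3 * t * sqrt t"
    using t by (simp add: power3_eq_cube algebra_simps)
  have a: "- (k^2) / (2 * (s * sqrt t)^2) = - (\<theta>^2 * \<tau> / (2 * s^2))"
    unfolding k2 using t s by (simp add: power_mult_distrib field_simps)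
  have b: "(s * sqrt t)^3 / k^2 = s^3 * sqrt t / (\<theta>^2 * \<tau>)"
    unfolding k2 v3 using t s \<theta> \<tau> by (simp add: field_simps)
  have "bs_tail k (s * sqrt t)
      = exp (k / 2) * exp (- (\<theta>^2 * \<tau> / (2 * s^2))) * (s^3 / (\<theta>^2 * sqrt (2 * pi))) * sqrt t / \<tau>"
    unfolding bs_tail_def a b using \<tau> \<theta> by (simp add: field_simps)
  then have "ln (bs_tail k (s * sqrt t))
      = (k / 2 - \<theta>^2 * \<tau> / (2 * s^2)) + ln (s^3 / (\<theta>^2 * sqrt (2 * pi))) + ln (sqrt t) - ln \<tau>"
    using t \<tau> s \<theta> by (simp add: ln_div ln_mult)
  then show ?thesis using t \<tau> by (simp add: ln_sqrt)
qed

lemma fixed_point_equation: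
  assumes t: "0 < t" "t < 1" and s: "s > 0" and \<theta>: "\<theta> \<noteq> 0" and Q: "Q > 0"
  defines "\<tau> \<equiv> ln (1 / t)"
  defines "k \<equiv> \<theta> * sqrt (t * \<tau>)"
  shows "\<theta>^2 / s^2 = (2 * J_fun t Q - 1)
    + 2 / \<tau> * (ln (s^3 / (\<theta>^2 * sqrt (2 * pi))) + (k / 2 + ln (Q / bs_tail k (s * sqrt t))))"
proof -
  have \<tau>: "\<tau> > 0" "ln t = - \<tau>" using t by (simp_all add: \<tau>_def ln_div)
  have "bs_tail k (s * sqrt t) > 0"
    using s t \<theta> \<tau> by (intro bs_tail_pos) (simp_all add: k_def)
  then have "ln (Q / bs_tail k (s * sqrt t)) = ln Q - ln (bs_tail k (s * sqrt t))"
    using Q by (simp add: ln_div)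
  then show ?thesis
    using ln_bs_tail_small_time[OF t s \<theta>] \<tau> unfolding J_fun_def \<tau>_def[symmetric] k_def[symmetric]
    by (simp add: field_simps)
qed

section \<open>Inverting the fixed point equation\<close>

lemma inverse_sqrt_lipschitz:
  fixes y1 y2 m :: real
  assumes m: "m > 0" and y: "y1 \<ge> m" "y2 \<ge> m"
  shows "\<bar>1 / sqrt y1 - 1 / sqrt y2\<bar> \<le> \<bar>y1 - y2\<bar> / (2 * m * sqrt m)"
proof -
  define a b where "a = sqrt y1" and "b = sqrt y2"
  have sm: "sqrt m > 0" using m by simp
  have a: "a \<ge> sqrt m" "b \<ge> sqrt m" using y by (auto simp: a_def b_def)
  have ap: "a > 0" "b > 0" using a sm by linarith+
  have y1: "y1 = a^2" and y2: "y2 = b^2" using y m by (auto simp: a_def b_def)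
  have "(a + b) * a * b \<noteq> 0" using ap by simp
  then have "1 / a - 1 / b = (b^2 - a^2) / ((a + b) * a * b)"
    by (subst eq_divide_eq) (auto simp: algebra_simps power2_eq_square)
  then have "\<bar>1 / a - 1 / b\<bar> = \<bar>a^2 - b^2\<bar> / ((a + b) * a * b)" using ap
    by (simp add: abs_minus_commute)
  also have "\<dots> \<le> \<bar>a^2 - b^2\<bar> / (2 * m * sqrt m)"
  proof (rule divide_left_mono)
    have "(a + b) * (a * b) \<ge> (2 * sqrt m) * (sqrt m * sqrt m)"
      using a sm ap by (intro mult_mono) (auto intro!: mult_mono)
    then show "2 * m * sqrt m \<le> (a + b) * a * b" using m by (simp add: ac_simps)
    show "0 < (a + b) * a * b * (2 * m * sqrt m)" using ap m by simp
  qed simp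
  moreover have "sqrt y1 = a" "sqrt y2 = b" by (simp_all add: a_def b_def)
  ultimately show ?thesis by (simp only: y1 y2)
qed

lemma ln_lipschitz:
  fixes a b \<mu> :: real
  assumes "\<mu> > 0" "a \<ge> \<mu>" "b \<ge> \<mu>"
  shows "\<bar>ln a - ln b\<bar> \<le> \<bar>a - b\<bar> / \<mu>"
proof -
  have "ln a - ln b \<le> (a - b) / b" if "a \<ge> \<mu>" "b \<ge> \<mu>" for a b
  proof -
    have "ln (a / b) \<le> a / b - 1" using that assms(1) by (intro ln_le_minus_one) auto
    then show ?thesis using that assms(1) by (simp add: ln_div field_simps)
  qed
  moreover have "(a - b) / b \<le> \<bar>a - b\<bar> / \<mu>" if "a \<ge> \<mu>" "b \<ge> \<mu>" for a b
  proof -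
    have "(a - b) / b \<le> \<bar>a - b\<bar> / b" using that assms(1) by (simp add: divide_right_mono)
    also have "\<dots> \<le> \<bar>a - b\<bar> / \<mu>" using that assms(1) by (intro divide_left_mono) auto
    finally show ?thesis .
  qed
  ultimately have "ln a - ln b \<le> \<bar>a - b\<bar> / \<mu>" "ln b - ln a \<le> \<bar>b - a\<bar> / \<mu>"
    using assms by (meson order_trans)+
  then show ?thesis by (simp add: abs_minus_commute)
qed

lemma inverse_sqrt_taylor:
  fixes D y m Mx :: real
  assumes m: "m > 0" and D: "m \<le> D" "D \<le> Mx" and y: "m \<le> y" "y \<le> Mx"
  shows "\<bar>1 / sqrt y - 1 / sqrt D - (D - y) / (2 * D * sqrt D)\<bar> \<le> (3 * sqrt Mx / (8 * m^3)) * (D - y)^2"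
proof -
  define a b where "a = sqrt D" and "b = sqrt y"
  have sm: "sqrt m > 0" using m by simp
  have a: "a \<ge> sqrt m" "b \<ge> sqrt m" "a \<le> sqrt Mx" "b \<le> sqrt Mx" using D y by (auto simp: a_def b_def)
  have ap: "a > 0" "b > 0" using a sm by linarith+
  have D2: "D = a^2" and y2: "y = b^2" using D y m by (auto simp: a_def b_def)
  have id: "1/b - 1/a - (a^2-b^2)/(2*a^2*a) = (a-b)^2*(2*a+b)/(2*a^3*b)"
    using ap by (simp add: diff_frac_eq frac_eq_eq) algebra
  have id2: "(a-b)^2 = (a^2-b^2)^2 / (a+b)^2"
    using ap by (simp add: eq_divide_eq) algebra
  have num: "2 * a + b \<le> 3 * sqrt Mx" using a by linarith
  have den: "8 * m^3 \<le> 2 * a^3 * b * (a + b)^2"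
  proof -
    have "2 * sqrt m \<le> a + b" using a by linarith
    then have h3: "(2 * sqrt m)^2 \<le> (a + b)^2" using sm by (intro power_mono) auto
    have h1: "(sqrt m)^3 \<le> a^3" by (rule power_mono) (use a sm in auto)
    have "(sqrt m)^3 * sqrt m \<le> a^3 * b" by (rule mult_mono[OF h1 a(2)]) (use sm ap in auto)
    then have "(sqrt m)^3 * sqrt m * (2 * sqrt m)^2 \<le> a^3 * b * (a + b)^2"
      by (rule mult_mono[OF _ h3]) (use sm ap in auto)
    moreover have "(sqrt m)^3 * sqrt m * (2 * sqrt m)^2 = 4 * m^3"
    proof -
      have "(sqrt m)^3 * sqrt m * (2 * sqrt m)^2 = 4 * ((sqrt m)^2)^3" by algebra
      also have "(sqrt m)^2 = m" using m by simp
      finally show ?thesis .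
    qed
    ultimately have "4 * m^3 \<le> a^3 * b * (a + b)^2" by linarith
    moreover have "2 * a^3 * b * (a + b)^2 = 2 * (a^3 * b * (a + b)^2)" by (simp add: mult.assoc)
    ultimately show ?thesis by linarith
  qed
  have "(a-b)^2*(2*a+b)/(2*a^3*b) = (a^2-b^2)^2/(a+b)^2*(2*a+b)/(2*a^3*b)"
    by (simp only: id2)
  also have "\<dots> = (a^2-b^2)^2 * ((2*a+b) / (2*a^3*b*(a+b)^2))"
    by simp
  also have "\<dots> \<le> (a^2-b^2)^2 * (3 * sqrt Mx / (8 * m^3))"
    by (rule mult_left_mono[OF frac_le[OF _ num _ den]]) (use m D in auto)
  finally have "\<bar>1 / b - 1 / a - (a^2 - b^2) / (2 * a^2 * a)\<bar> \<le> (3 * sqrt Mx / (8 * m^3)) * (a^2 - b^2)^2"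
    using id ap by (simp add: mult.commute)
  moreover have "sqrt D = a" "sqrt y = b" by (simp_all add: a_def b_def)
  ultimately show ?thesis by (simp only: D2 y2)
qed


lemma powr_three_halves: "D > 0 \<Longrightarrow> D powr (3/2) = D * sqrt D"
proof -
  assume D: "D > (0::real)"
  have "D powr (3/2) = D powr (1 + 1/2)" by simp
  also have "\<dots> = D powr 1 * D powr (1/2)" by (rule powr_add)
  also have "\<dots> = D * D powr (1/2)" using D by simp
  also have "D powr (1/2) = sqrt D" using D by (simp add: powr_half_sqrt)
  finally show ?thesis .
qed

lemma abs_ln_le_of_bounds: "0 < (a::real) \<Longrightarrow> a \<le> x \<Longrightarrow> x \<le> b \<Longrightarrow> \<bar>ln x\<bar> \<le> \<bar>ln a\<bar> + \<bar>ln b\<bar>"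
proof -
  assume "0 < a" "a \<le> x" "x \<le> b"
  moreover have "ln a \<le> ln x" using \<open>0 < a\<close> \<open>a \<le> x\<close> by (intro ln_mono)
  moreover have "ln x \<le> ln b" using \<open>0 < a\<close> \<open>a \<le> x\<close> \<open>x \<le> b\<close> by (intro ln_mono) auto
  ultimately show ?thesis by (smt (verit))
qed


definition vol_expansion :: "real \<Rightarrow> real \<Rightarrow> real \<Rightarrow> real" where
  "vol_expansion \<theta> \<tau> D = \<bar>\<theta>\<bar> / sqrt D + \<bar>\<theta>\<bar> * ln (D powr (3/2) * sqrt (2 * pi) / \<bar>\<theta>\<bar>) / D powr (3/2) * (1 / \<tau>)"

lemma vol_expansion_error_eq:
  assumes D: "D > 0" and \<tau>: "\<tau> \<noteq> 0" and y: "y > 0" and \<theta>: "\<theta> \<noteq> 0"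
    and eq: "D - y = 2 / \<tau> * (ln (D powr (3/2) * sqrt (2 * pi) / \<bar>\<theta>\<bar>) - e)"
  shows "\<bar>\<theta>\<bar> / sqrt y - vol_expansion \<theta> \<tau> D
    = \<bar>\<theta>\<bar> * (1 / sqrt y - 1 / sqrt D - (D - y) / (2 * D * sqrt D)) - \<bar>\<theta>\<bar> * (e * (1 / (D * sqrt D)) * (1 / \<tau>))"
  unfolding eq vol_expansion_def powr_three_halves[OF D] using D \<tau> by (simp add: field_simps)

lemma fixed_point_residual_bigo:
  fixes F :: "'a filter" and \<tau> s D R :: "'a \<Rightarrow> real"
  assumes \<theta>: "\<theta> \<noteq> 0" and s0: "0 < s0"
    and \<tau>: "filterlim \<tau> at_top F"
    and s: "\<forall>\<^sub>F x in F. s0 \<le> s x \<and> s x \<le> S1"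
    and R: "R \<in> O[F](\<lambda>x. 1 / \<tau> x)"
    and eq: "\<forall>\<^sub>F x in F. \<theta>^2 / s x ^ 2 = D x + 2 / \<tau> x * (ln (s x ^ 3 / (\<theta>^2 * sqrt (2 * pi))) + R x)"
  shows "(\<lambda>x. \<theta>^2 / s x ^ 2 - D x) \<in> O[F](\<lambda>x. 1 / \<tau> x)"
proof -
  define c where "c = \<theta>^2 * sqrt (2 * pi)"
  have c: "c > 0" using \<theta> by (simp add: c_def)
  have inv_\<tau>: "(\<lambda>x. 1 / \<tau> x) \<in> O[F](\<lambda>_. 1)"
  proof (rule bigoI[of _ 1])
    show "\<forall>\<^sub>F x in F. norm (1 / \<tau> x) \<le> 1 * norm (1::real)"
      using \<tau>[unfolded filterlim_at_top, rule_format, of 1] by eventually_elim simp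
  qed
  have "(\<lambda>x. ln (s x ^ 3 / c)) \<in> O[F](\<lambda>_. 1)"
  proof (rule bigoI[of _ "3 * (\<bar>ln s0\<bar> + \<bar>ln S1\<bar>) + \<bar>ln c\<bar>"])
    show "\<forall>\<^sub>F x in F. norm (ln (s x ^ 3 / c)) \<le> (3 * (\<bar>ln s0\<bar> + \<bar>ln S1\<bar>) + \<bar>ln c\<bar>) * norm (1::real)"
      using s
    proof eventually_elim
      case (elim x)
      then have "ln (s x ^ 3 / c) = 3 * ln (s x) - ln c" using s0 c by (simp add: ln_div ln_realpow)
      moreover have "\<bar>ln (s x)\<bar> \<le> \<bar>ln s0\<bar> + \<bar>ln S1\<bar>" using elim s0 by (intro abs_ln_le_of_bounds) auto
      ultimately show ?case by simp
    qed
  qed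
  then have "(\<lambda>x. ln (s x ^ 3 / c) + R x) \<in> O[F](\<lambda>_. 1)"
    by (intro sum_in_bigo landau_o.big_trans[OF R inv_\<tau>])
  moreover have "(\<lambda>x. 2 / \<tau> x) \<in> O[F](\<lambda>x. 1 / \<tau> x)" by (rule bigoI[of _ 2]) simp
  ultimately have "(\<lambda>x. 2 / \<tau> x * (ln (s x ^ 3 / c) + R x)) \<in> O[F](\<lambda>x. 1 / \<tau> x)"
    using landau_o.big.mult by fastforce
  moreover have "\<forall>\<^sub>F x in F. 2 / \<tau> x * (ln (s x ^ 3 / c) + R x) = \<theta>^2 / s x ^ 2 - D x"
    using eq by eventually_elim (simp add: c_def)
  ultimately show ?thesis by (simp add: landau_o.big.in_cong)
qed

lemma inverse_square_bounds:
  fixes \<theta> s s0 S1 :: real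
  assumes \<theta>: "\<theta> \<noteq> 0" and s: "0 < s0" "s0 \<le> s" "s \<le> S1"
  shows "\<theta>^2 / S1^2 \<le> \<theta>^2 / s^2" "\<theta>^2 / s^2 \<le> \<theta>^2 / s0^2" "s = \<bar>\<theta>\<bar> / sqrt (\<theta>^2 / s^2)"
proof -
  have "s^2 \<le> S1^2" "s0^2 \<le> s^2" using s by (auto intro: power_mono)
  then show "\<theta>^2 / S1^2 \<le> \<theta>^2 / s^2" "\<theta>^2 / s^2 \<le> \<theta>^2 / s0^2"
    using s by (auto intro!: divide_left_mono)
  show "s = \<bar>\<theta>\<bar> / sqrt (\<theta>^2 / s^2)" using s \<theta> by (simp add: real_sqrt_divide)
qed

lemma inverse_sqrt_taylor_bigo:
  fixes y D g :: "'a \<Rightarrow> real"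
  assumes m: "0 < m" and bounds: "\<forall>\<^sub>F x in F. m \<le> y x \<and> y x \<le> M \<and> m \<le> D x \<and> D x \<le> M"
    and y_D: "(\<lambda>x. y x - D x) \<in> O[F](g)"
  shows "(\<lambda>x. 1 / sqrt (y x) - 1 / sqrt (D x) - (D x - y x) / (2 * D x * sqrt (D x))) \<in> O[F](\<lambda>x. g x ^ 2)"
proof -
  have "\<forall>\<^sub>F x in F. norm (1 / sqrt (y x) - 1 / sqrt (D x) - (D x - y x) / (2 * D x * sqrt (D x)))
      \<le> 3 * sqrt M / (8 * m^3) * norm ((y x - D x) * (y x - D x))"
    using bounds
  proof eventually_elim
    case (elim x)
    then have "\<bar>1 / sqrt (y x) - 1 / sqrt (D x) - (D x - y x) / (2 * D x * sqrt (D x))\<bar>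
        \<le> 3 * sqrt M / (8 * m^3) * (D x - y x)^2"
      using m by (intro inverse_sqrt_taylor) auto
    moreover have "(D x - y x)^2 = \<bar>(y x - D x) * (y x - D x)\<bar>"
      by (metis abs_power2 power2_commute power2_eq_square)
    ultimately show ?case by simp
  qed
  then have "(\<lambda>x. 1 / sqrt (y x) - 1 / sqrt (D x) - (D x - y x) / (2 * D x * sqrt (D x)))
      \<in> O[F](\<lambda>x. (y x - D x) * (y x - D x))" by (rule bigoI)
  also have "(\<lambda>x. (y x - D x) * (y x - D x)) \<in> O[F](\<lambda>x. g x * g x)"
    using y_D y_D by (rule landau_o.big.mult)
  finally show ?thesis by (simp add: power2_eq_square)
qed

lemma fixed_point_first_order:
  fixes F :: "'a filter" and \<tau> s D R :: "'a \<Rightarrow> real"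
  assumes \<theta>: "\<theta> \<noteq> 0" and s0: "0 < s0" and d0: "0 < d0"
    and \<tau>: "filterlim \<tau> at_top F"
    and s: "\<forall>\<^sub>F x in F. s0 \<le> s x \<and> s x \<le> S1"
    and D: "\<forall>\<^sub>F x in F. d0 \<le> D x \<and> D x \<le> d1"
    and R: "R \<in> O[F](\<lambda>x. 1 / \<tau> x)"
    and eq: "\<forall>\<^sub>F x in F. \<theta>^2 / s x ^ 2 = D x + 2 / \<tau> x * (ln (s x ^ 3 / (\<theta>^2 * sqrt (2 * pi))) + R x)"
  shows "(\<lambda>x. ln (s x) - ln (\<bar>\<theta>\<bar> / sqrt (D x))) \<in> O[F](\<lambda>x. 1 / \<tau> x)"
proof -
  define m where "m = min d0 (\<theta>^2 / S1^2)"
  define \<mu> where "\<mu> = min s0 (\<bar>\<theta>\<bar> / sqrt d1)"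
  have "\<forall>\<^sub>F x in F. norm (s x - \<bar>\<theta>\<bar> / sqrt (D x)) \<le> \<bar>\<theta>\<bar> / (2 * m * sqrt m) * norm (\<theta>^2 / s x ^ 2 - D x)"
    using s D
  proof eventually_elim
    case (elim x)
    note y = inverse_square_bounds[OF \<theta> s0, of "s x" S1]
    have "\<bar>s x - \<bar>\<theta>\<bar> / sqrt (D x)\<bar> = \<bar>\<theta>\<bar> * \<bar>1 / sqrt (\<theta>^2 / s x ^ 2) - 1 / sqrt (D x)\<bar>"
      using y(3) elim by (subst y(3)) (simp_all add: abs_mult[symmetric] right_diff_distrib)
    also have "\<dots> \<le> \<bar>\<theta>\<bar> * (\<bar>\<theta>^2 / s x ^ 2 - D x\<bar> / (2 * m * sqrt m))"
      using elim y(1) \<theta> d0 s0 by (intro mult_left_mono inverse_sqrt_lipschitz) (auto simp: m_def)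
    finally show ?case by simp
  qed
  then have "(\<lambda>x. s x - \<bar>\<theta>\<bar> / sqrt (D x)) \<in> O[F](\<lambda>x. \<theta>^2 / s x ^ 2 - D x)" by (rule bigoI)
  then have s_s\<^sub>0: "(\<lambda>x. s x - \<bar>\<theta>\<bar> / sqrt (D x)) \<in> O[F](\<lambda>x. 1 / \<tau> x)"
    using fixed_point_residual_bigo[OF \<theta> s0 \<tau> s R eq] by (rule landau_o.big_trans)
  have "\<forall>\<^sub>F x in F. norm (ln (s x) - ln (\<bar>\<theta>\<bar> / sqrt (D x))) \<le> 1 / \<mu> * norm (s x - \<bar>\<theta>\<bar> / sqrt (D x))"
    using s D
  proof eventually_elim
    case (elim x)
    have "\<bar>\<theta>\<bar> / sqrt d1 \<le> \<bar>\<theta>\<bar> / sqrt (D x)"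
      using elim d0 \<theta> by (auto intro!: divide_left_mono)
    then have "\<bar>ln (s x) - ln (\<bar>\<theta>\<bar> / sqrt (D x))\<bar> \<le> \<bar>s x - \<bar>\<theta>\<bar> / sqrt (D x)\<bar> / \<mu>"
      using elim s0 \<theta> d0 by (intro ln_lipschitz) (auto simp: \<mu>_def min_le_iff_disj)
    then show ?case by simp
  qed
  then have "(\<lambda>x. ln (s x) - ln (\<bar>\<theta>\<bar> / sqrt (D x))) \<in> O[F](\<lambda>x. s x - \<bar>\<theta>\<bar> / sqrt (D x))" by (rule bigoI)
  then show ?thesis using s_s\<^sub>0 by (rule landau_o.big_trans)
qed

lemma fixed_point_expansion:
  fixes F :: "'a filter" and \<tau> s D R :: "'a \<Rightarrow> real"
  assumes \<theta>: "\<theta> \<noteq> 0" and s0: "0 < s0" and d0: "0 < d0"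
    and \<tau>: "filterlim \<tau> at_top F"
    and s: "\<forall>\<^sub>F x in F. s0 \<le> s x \<and> s x \<le> S1"
    and D: "\<forall>\<^sub>F x in F. d0 \<le> D x \<and> D x \<le> d1"
    and R: "R \<in> O[F](\<lambda>x. 1 / \<tau> x)"
    and eq: "\<forall>\<^sub>F x in F. \<theta>^2 / s x ^ 2 = D x + 2 / \<tau> x * (ln (s x ^ 3 / (\<theta>^2 * sqrt (2 * pi))) + R x)"
  shows "(\<lambda>x. s x - vol_expansion \<theta> (\<tau> x) (D x)) \<in> O[F](\<lambda>x. 1 / \<tau> x ^ 2)"
proof -
  define y where "y x = \<theta>^2 / s x ^ 2" for x
  define e where "e x = 3 * (ln (s x) - ln (\<bar>\<theta>\<bar> / sqrt (D x))) + R x" for x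
  define m where "m = min d0 (\<theta>^2 / (max s0 S1)^2)"
  have "e \<in> O[F](\<lambda>x. 1 / \<tau> x)"
    unfolding e_def using fixed_point_first_order[OF \<theta> s0 d0 \<tau> s D R eq] R
    by (intro sum_in_bigo) (simp_all only: landau_o.big.cmult_in_iff)
  moreover have "(\<lambda>x. 1 / (D x * sqrt (D x))) \<in> O[F](\<lambda>_. 1)"
  proof (rule bigoI[of _ "1 / (d0 * sqrt d0)"])
    show "\<forall>\<^sub>F x in F. norm (1 / (D x * sqrt (D x))) \<le> 1 / (d0 * sqrt d0) * norm (1::real)"
      using D by eventually_elim (use d0 in \<open>auto intro!: divide_left_mono mult_mono\<close>)
  qed
  ultimately have "(\<lambda>x. e x * (1 / (D x * sqrt (D x))) * (1 / \<tau> x)) \<in> O[F](\<lambda>x. 1 / \<tau> x * 1 * (1 / \<tau> x))"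
    by (intro landau_o.big.mult) simp_all
  then have e_term: "(\<lambda>x. e x * (1 / (D x * sqrt (D x))) * (1 / \<tau> x)) \<in> O[F](\<lambda>x. 1 / \<tau> x ^ 2)"
    by (simp add: power2_eq_square)
  have "\<forall>\<^sub>F x in F. m \<le> y x \<and> y x \<le> max d1 (\<theta>^2 / s0^2) \<and> m \<le> D x \<and> D x \<le> max d1 (\<theta>^2 / s0^2)"
    using s D
  proof eventually_elim
    case (elim x)
    then have "max s0 S1 = S1" by simp
    with elim inverse_square_bounds[OF \<theta> s0, of "s x" S1] show ?case by (auto simp: y_def m_def)
  qed
  from inverse_sqrt_taylor_bigo[OF _ this fixed_point_residual_bigo[OF \<theta> s0 \<tau> s R eq, folded y_def]]
  have taylor: "(\<lambda>x. 1 / sqrt (y x) - 1 / sqrt (D x) - (D x - y x) / (2 * D x * sqrt (D x)))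
      \<in> O[F](\<lambda>x. 1 / \<tau> x ^ 2)"
    using \<theta> d0 s0 by (simp add: m_def less_max_iff_disj power_divide)
  have "\<forall>\<^sub>F x in F. s x - vol_expansion \<theta> (\<tau> x) (D x)
      = \<bar>\<theta>\<bar> * (1 / sqrt (y x) - 1 / sqrt (D x) - (D x - y x) / (2 * D x * sqrt (D x)))
        - \<bar>\<theta>\<bar> * (e x * (1 / (D x * sqrt (D x))) * (1 / \<tau> x))"
    using s D eq \<tau>[unfolded filterlim_at_top, rule_format, of 1]
  proof eventually_elim
    case (elim x)
    have Dp: "D x > 0" and sp: "s x > 0" using elim d0 s0 by auto
    define c where "c = \<theta>^2 * sqrt (2 * pi)"
    define \<Lambda> where "\<Lambda> = ln (D x powr (3/2) * sqrt (2 * pi) / \<bar>\<theta>\<bar>)"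
    have "(\<bar>\<theta>\<bar> / sqrt (D x)) ^ 3 / c = 1 / (D x powr (3/2) * sqrt (2 * pi) / \<bar>\<theta>\<bar>)"
      using \<theta> Dp by (simp add: c_def powr_three_halves power3_eq_cube power2_eq_square field_simps)
    then have "ln ((\<bar>\<theta>\<bar> / sqrt (D x)) ^ 3 / c) = - \<Lambda>" using \<theta> Dp by (simp add: \<Lambda>_def ln_div)
    moreover have "c > 0" using \<theta> by (simp add: c_def)
    ultimately have "ln (s x ^ 3 / c) = e x - R x - \<Lambda>"
      using sp \<theta> Dp by (simp add: e_def ln_div ln_realpow)
    then have "y x = D x + 2 / \<tau> x * (e x - \<Lambda>)" using elim(3) by (simp add: y_def c_def)
    then have "D x - y x = 2 / \<tau> x * (\<Lambda> - e x)" by (simp add: right_diff_distrib)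
    moreover have "s x = \<bar>\<theta>\<bar> / sqrt (y x)"
      unfolding y_def using elim by (intro inverse_square_bounds(3)[OF \<theta> s0, of _ S1]) auto
    moreover have "0 < y x" "\<tau> x \<noteq> 0" using sp \<theta> elim(4) by (auto simp: y_def)
    ultimately show ?case using Dp \<theta> unfolding \<Lambda>_def by (simp add: vol_expansion_error_eq)
  qed
  moreover have "(\<lambda>x. \<bar>\<theta>\<bar> * (1 / sqrt (y x) - 1 / sqrt (D x) - (D x - y x) / (2 * D x * sqrt (D x)))
      - \<bar>\<theta>\<bar> * (e x * (1 / (D x * sqrt (D x))) * (1 / \<tau> x))) \<in> O[F](\<lambda>x. 1 / \<tau> x ^ 2)"
    using \<theta> taylor e_term by (intro sum_in_bigo) (simp_all only: landau_o.big.cmult_in_iff abs_eq_0 not_False_eq_True)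
  ultimately show ?thesis by (simp add: landau_o.big.in_cong)
qed

section \<open>Uniform bounds on the implied volatility for small t\<close>

lemma fixed_point_lower_bound:
  fixes \<theta> \<tau> s c R D d1 :: real
  assumes \<tau>: "1 \<le> \<tau>" and s: "0 < s" and c: "0 < c" and R: "R \<le> r" "0 \<le> r" and D: "D \<le> d1"
    and eq: "\<theta>^2 / s^2 = D + 2 / \<tau> * (ln (s^3 / c) + R)"
  shows "min 1 (\<bar>\<theta>\<bar> / sqrt (d1 + 2 * (\<bar>ln c\<bar> + r))) \<le> s"
proof (cases "1 \<le> s")
  case False
  define A where "A = d1 + 2 * (\<bar>ln c\<bar> + r)"
  have "ln (s^3 / c) = 3 * ln s - ln c" using s c by (simp add: ln_div ln_realpow)
  moreover have "ln s \<le> 0" using False s by simp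
  ultimately have X: "ln (s^3 / c) + R \<le> \<bar>ln c\<bar> + r" using R by linarith
  have "2 / \<tau> * (ln (s^3 / c) + R) \<le> 2 * (\<bar>ln c\<bar> + r)"
  proof (cases "0 \<le> ln (s^3 / c) + R")
    case True
    have "2 / \<tau> * (ln (s^3 / c) + R) \<le> 2 * (ln (s^3 / c) + R)"
      using \<tau> True by (intro mult_right_mono) (auto simp: divide_le_eq)
    also have "\<dots> \<le> 2 * (\<bar>ln c\<bar> + r)" using X by simp
    finally show ?thesis .
  next
    case False
    then have "2 / \<tau> * (ln (s^3 / c) + R) < 0" using \<tau> by (intro mult_pos_neg) auto
    moreover have "0 \<le> 2 * (\<bar>ln c\<bar> + r)" using R(2) by simp
    ultimately show ?thesis by (rule order.trans[OF less_imp_le])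
  qed
  then have "\<theta>^2 / s^2 \<le> A" using eq D by (simp add: A_def)
  then have "0 \<le> A" by (rule order.trans[rotated]) simp
  from \<open>\<theta>^2 / s^2 \<le> A\<close> have "\<theta>^2 \<le> A * s^2" using s by (simp add: divide_le_eq)
  then have "sqrt (\<theta>^2) \<le> sqrt (A * s^2)" by (rule real_sqrt_le_mono)
  then have "sqrt (\<theta>^2) \<le> sqrt A * s" using s by (simp add: real_sqrt_mult)
  then have "\<bar>\<theta>\<bar> / sqrt A \<le> s" using s \<open>0 \<le> A\<close> by (cases "A = 0") (auto simp: divide_le_eq mult.commute)
  then show ?thesis by (simp add: A_def)
qed simp

text \<open>S1 is chosen with \<theta>^2/S1^2 = d0/2, so at total volatility S1\<surd>t the fixed point equation would
  force D < d0; monotonicity of the time value then bounds the implied volatility by S1.\<close>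

lemma fixed_point_upper_bound:
  fixes t \<theta> d0 s I :: real
  defines "\<tau> \<equiv> ln (1 / t)"
  defines "k \<equiv> \<theta> * sqrt (t * \<tau>)"
  defines "S1 \<equiv> \<bar>\<theta>\<bar> * sqrt (2 / d0)"
  assumes t: "0 < t" "t < 1" and \<theta>: "\<theta> \<noteq> 0" and d0: "0 < d0" and s: "0 < s"
    and Q: "bs_time_value k (s * sqrt t) = I" and D: "d0 \<le> 2 * J_fun t I - 1"
    and small: "\<bar>k\<bar> \<le> 2" "S1^2 * t \<le> 1" "6 * S1^2 \<le> \<theta>^2 * \<tau>"
      "4 * (\<bar>ln (S1^3 / (\<theta>^2 * sqrt (2 * pi)))\<bar> + 3) < d0 * \<tau>"
  shows "s \<le> S1"
proof (rule ccontr)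
  assume "\<not> s \<le> S1"
  have \<tau>: "0 < \<tau>" "ln t < 0" using t by (simp_all add: \<tau>_def)
  have k: "k \<noteq> 0" using \<theta> t \<tau> by (simp add: k_def)
  have S1: "0 < S1" "\<theta>^2 / S1^2 = d0 / 2"
    using \<theta> d0 by (simp_all add: S1_def power_mult_distrib field_simps)
  define Q1 where "Q1 = bs_time_value k (S1 * sqrt t)"
  have "0 < S1 * sqrt t" using S1 t by simp
  have "Q1 < I" unfolding Q1_def Q[symmetric]
    using \<open>\<not> s \<le> S1\<close> t \<open>0 < S1 * sqrt t\<close> by (intro bs_time_value_strict_mono) auto
  moreover have Q1: "0 < Q1" unfolding Q1_def using k \<open>0 < S1 * sqrt t\<close> by (rule bs_time_value_pos)
  ultimately have "ln I / ln t < ln Q1 / ln t" using \<tau> by (simp add: divide_strict_right_mono_neg)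
  then have DQ1: "2 * J_fun t I - 1 < 2 * J_fun t Q1 - 1" by (simp add: J_fun_def)
  define A where "A = ln (S1^3 / (\<theta>^2 * sqrt (2 * pi)))"
  define \<rho> where "\<rho> = ln (Q1 / bs_tail k (S1 * sqrt t))"
  have v1k: "(S1 * sqrt t)^2 / k^2 = S1^2 / (\<theta>^2 * \<tau>)"
    using t \<theta> \<tau> by (simp add: k_def power_mult_distrib)
  have v1: "(S1 * sqrt t)^2 = S1^2 * t" using t by (simp add: power_mult_distrib)
  have "3 * (S1^2 / (\<theta>^2 * \<tau>)) \<le> 1 / 2" "6 * (S1^2 / (\<theta>^2 * \<tau>)) \<le> 1"
    using small(3) \<theta> \<tau> by (simp_all add: field_simps)
  with ln_bs_time_value_over_tail_bounds(1)[OF k \<open>0 < S1 * sqrt t\<close>, unfolded v1k, unfolded v1]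
  have "- 2 \<le> \<rho>" using small(2) by (simp add: \<rho>_def Q1_def)
  then have "- (\<bar>A\<bar> + 3) \<le> A + (k / 2 + \<rho>)" using small(1) by (simp add: abs_le_iff) linarith
  then have "2 / \<tau> * (- (\<bar>A\<bar> + 3)) \<le> 2 / \<tau> * (A + (k / 2 + \<rho>))" using \<tau> by (intro mult_left_mono) auto
  then have "- (2 / \<tau> * (\<bar>A\<bar> + 3)) \<le> 2 / \<tau> * (A + (k / 2 + \<rho>))" by (simp only: mult_minus_right)
  moreover have "d0 / 2 = (2 * J_fun t Q1 - 1) + 2 / \<tau> * (A + (k / 2 + \<rho>))"
    using fixed_point_equation[OF t S1(1) \<theta> Q1] S1(2) by (simp add: A_def \<rho>_def \<tau>_def k_def)
  moreover have "2 / \<tau> * (\<bar>A\<bar> + 3) < d0 / 2"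
    using small(4) \<tau> by (simp add: A_def field_simps)
  moreover have "\<And>X Y D1 :: real. - Y \<le> X \<Longrightarrow> d0 / 2 = D1 + X \<Longrightarrow> Y < d0 / 2 \<Longrightarrow> D1 < d0" by linarith
  ultimately have "2 * J_fun t Q1 - 1 < d0" by blast
  then show False using D DQ1 by simp
qed

lemma fixed_point_remainder_bound:
  fixes t \<theta> s S1 I :: real
  defines "\<tau> \<equiv> ln (1 / t)"
  defines "k \<equiv> \<theta> * sqrt (t * \<tau>)"
  assumes t: "0 < t" "t < 1" and \<theta>: "\<theta> \<noteq> 0" and s: "0 < s" "s \<le> S1"
    and Q: "bs_time_value k (s * sqrt t) = I"
    and small: "\<bar>k\<bar> * \<tau> \<le> 2" "S1^2 * t * \<tau> \<le> 8" "6 * S1^2 \<le> \<theta>^2 * \<tau>"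
  shows "\<bar>k / 2 + ln (I / bs_tail k (s * sqrt t))\<bar> \<le> (2 + 6 * S1^2 / \<theta>^2) / \<tau>"
proof -
  have \<tau>: "0 < \<tau>" using t by (simp add: \<tau>_def)
  have k: "k \<noteq> 0" using \<theta> t \<tau> by (simp add: k_def)
  have "0 < s * sqrt t" using s t by simp
  have vk: "(s * sqrt t)^2 / k^2 = s^2 / (\<theta>^2 * \<tau>)"
    using t \<theta> \<tau> by (simp add: k_def power_mult_distrib)
  have v: "(s * sqrt t)^2 = s^2 * t" using t by (simp add: power_mult_distrib)
  have ss: "s^2 \<le> S1^2" using s by (simp add: power_mono)
  then have "s^2 * t * \<tau> \<le> S1^2 * t * \<tau>" using t \<tau> by (intro mult_right_mono) auto
  then have "s^2 * t * \<tau> \<le> 8" using small(2) by linarith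
  then have "s^2 * t / 8 \<le> 1 / \<tau>" using \<tau> by (simp add: field_simps)
  have "6 * (s^2 / (\<theta>^2 * \<tau>)) \<le> 6 * S1^2 / \<theta>^2 / \<tau>"
    using ss \<theta> \<tau> by (simp add: divide_right_mono field_simps)
  have "3 * (s^2 / (\<theta>^2 * \<tau>)) \<le> 1 / 2"
    using ss small(3) \<theta> \<tau> by (simp add: field_simps)
  with ln_bs_time_value_over_tail_bounds[OF k \<open>0 < s * sqrt t\<close>, unfolded vk, unfolded v Q]
  have "- (s^2 * t / 8) - 6 * (s^2 / (\<theta>^2 * \<tau>)) \<le> ln (I / bs_tail k (s * sqrt t))"
    "ln (I / bs_tail k (s * sqrt t)) \<le> 0" by auto
  moreover have "\<bar>k / 2\<bar> \<le> 1 / \<tau>" using small(1) \<tau> by (simp add: field_simps)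
  ultimately show ?thesis
    using \<open>s^2 * t / 8 \<le> 1 / \<tau>\<close> \<open>6 * (s^2 / (\<theta>^2 * \<tau>)) \<le> 6 * S1^2 / \<theta>^2 / \<tau>\<close>
    by (simp add: add_divide_distrib abs_le_iff)
qed

lemma ln_inverse_at_right_0: "filterlim (\<lambda>t::real. ln (1 / t)) at_top (at_right 0)"
  by real_asymp

lemma J_fun_bounds:
  assumes c1: "c1 > 1/2"
    and ev1: "\<forall>\<^sub>F t in at_right 0. c1 < ln (I t) / ln t"
    and ev2: "\<forall>\<^sub>F t in at_right 0. ln (I t) / ln t < c2"
  shows "\<forall>\<^sub>F t in at_right 0. c1 - 1/2 \<le> 2 * J_fun t (I t) - 1 \<and> 2 * J_fun t (I t) - 1 \<le> 2 * c2 - 1"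
proof -
  have "((\<lambda>t::real. ln (ln (1 / t)) / ln (1 / t)) \<longlongrightarrow> 0) (at_right 0)" by real_asymp
  from order_tendstoD(2)[OF this, of "(c1 - 1/2) / 2"]
  have "\<forall>\<^sub>F t in at_right 0. ln (ln (1 / t)) / ln (1 / t) < (c1 - 1/2) / 2" using c1 by simp
  moreover have "\<forall>\<^sub>F t in at_right 0. 1 \<le> ln (1 / (t::real))"
    using ln_inverse_at_right_0[unfolded filterlim_at_top, rule_format, of 1] .
  ultimately show ?thesis using ev1 ev2
  proof eventually_elim
    case (elim t)
    then have "0 \<le> ln (ln (1 / t)) / ln (1 / t)" by simp
    moreover have "\<And>A L. 0 \<le> L \<Longrightarrow> L < (c1 - 1/2) / 2 \<Longrightarrow> c1 < A \<Longrightarrow> A < c2 \<Longrightarrow>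
        c1 - 1/2 \<le> 2 * (A - L) - 1 \<and> 2 * (A - L) - 1 \<le> 2 * c2 - 1" by auto
    ultimately show ?case using elim unfolding J_fun_def by blast
  qed
qed

lemma implied_vol_fixed_point_bounds:
  fixes t \<theta> d0 d1 \<sigma> I :: real
  defines "\<tau> \<equiv> ln (1 / t)"
  defines "k \<equiv> \<theta> * sqrt (t * \<tau>)"
  defines "c \<equiv> \<theta>^2 * sqrt (2 * pi)" and "S1 \<equiv> \<bar>\<theta>\<bar> * sqrt (2 / d0)"
  defines "R \<equiv> k / 2 + ln (I / bs_tail k (\<sigma> * sqrt t))"
  assumes t: "0 < t" "t < 1" and \<theta>: "\<theta> \<noteq> 0" and d0: "0 < d0" and \<sigma>: "0 < \<sigma>" and I: "0 < I"
    and Q: "bs_time_value k (\<sigma> * sqrt t) = I"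
    and D: "d0 \<le> 2 * J_fun t I - 1" "2 * J_fun t I - 1 \<le> d1"
    and small: "8 \<le> \<tau>" "6 * S1^2 \<le> \<theta>^2 * \<tau>" "4 * (\<bar>ln (S1^3 / c)\<bar> + 3) < d0 * \<tau>"
      "\<bar>k\<bar> * \<tau> \<le> 2" "S1^2 * t * \<tau> \<le> 8"
  shows "min 1 (\<bar>\<theta>\<bar> / sqrt (d1 + 2 * (\<bar>ln c\<bar> + 2))) \<le> \<sigma> \<and> \<sigma> \<le> S1 \<and> \<bar>R\<bar> \<le> (2 + 6 * S1^2 / \<theta>^2) / \<tau>
    \<and> \<theta>^2 / \<sigma>^2 = (2 * J_fun t I - 1) + 2 / \<tau> * (ln (\<sigma>^3 / c) + R)"
proof -
  have "\<bar>k\<bar> \<le> 2" using small(1,4) mult_left_mono[of 1 \<tau> "\<bar>k\<bar>"] by simp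
  moreover have "S1^2 * t \<le> 1" using small(1,5) mult_left_mono[of 8 \<tau> "S1^2 * t"] t by simp
  ultimately have upper: "\<sigma> \<le> S1"
    using fixed_point_upper_bound[of t \<theta> d0 \<sigma> I] t \<theta> d0 \<sigma> Q D(1) small(2,3)
    by (simp add: \<tau>_def k_def S1_def c_def)
  have eq: "\<theta>^2 / \<sigma>^2 = (2 * J_fun t I - 1) + 2 / \<tau> * (ln (\<sigma>^3 / c) + R)"
    using fixed_point_equation[OF t \<sigma> \<theta> I] by (simp add: \<tau>_def k_def R_def c_def)
  have rem: "\<bar>R\<bar> \<le> (2 + 6 * S1^2 / \<theta>^2) / \<tau>"
    using fixed_point_remainder_bound[OF t \<theta> \<sigma> upper] Q small(2,4,5) by (simp add: \<tau>_def k_def R_def)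
  have "6 * S1^2 / \<theta>^2 \<le> \<theta>^2 * \<tau> / \<theta>^2" using small(2) by (intro divide_right_mono) auto
  then have "2 + 6 * S1^2 / \<theta>^2 \<le> 2 * \<tau>" using \<theta> small(1) by simp
  then have "(2 + 6 * S1^2 / \<theta>^2) / \<tau> \<le> 2" using small(1) by (simp add: divide_le_eq)
  then have "min 1 (\<bar>\<theta>\<bar> / sqrt (d1 + 2 * (\<bar>ln c\<bar> + 2))) \<le> \<sigma>"
    using \<theta> \<sigma> D(2) eq small(1) rem
    by (intro fixed_point_lower_bound[where R = R and \<tau> = \<tau>]) (auto simp: c_def)
  then show ?thesis using upper rem eq by blast
qed

lemma eventually_small_time:
  fixes \<theta> T A :: real
  assumes "0 \<le> A"
  shows "\<forall>\<^sub>F t in at_right 0. 0 < t \<and> t < 1 \<and> T \<le> ln (1 / t)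
    \<and> \<bar>\<theta> * sqrt (t * ln (1 / t))\<bar> * ln (1 / t) \<le> 2 \<and> A * t * ln (1 / t) \<le> 8"
proof -
  have "((\<lambda>t::real. \<bar>\<theta>\<bar> * (sqrt (t * ln (1 / t)) * ln (1 / t))) \<longlongrightarrow> 0) (at_right 0)"
    and "((\<lambda>t::real. (A + 1) * (t * ln (1 / t))) \<longlongrightarrow> 0) (at_right 0)" by real_asymp+
  from order_tendstoD(2)[OF this(1), of 2] order_tendstoD(2)[OF this(2), of 8]
  have "\<forall>\<^sub>F t in at_right 0. \<bar>\<theta>\<bar> * (sqrt (t * ln (1 / t)) * ln (1 / t)) < 2 \<and> (A + 1) * (t * ln (1 / t)) < 8"
    by (simp add: eventually_conj_iff)
  moreover have "\<forall>\<^sub>F t in at_right 0. T \<le> ln (1 / t)"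
    using ln_inverse_at_right_0[unfolded filterlim_at_top, rule_format, of T] .
  moreover have "\<forall>\<^sub>F t in at_right (0::real). 0 < t \<and> t < 1"
    by (auto simp: eventually_at_right_field intro!: exI[of _ 1])
  ultimately show ?thesis
  proof eventually_elim
    case (elim t)
    then have "0 < t * ln (1 / t)" by simp
    then have "A * (t * ln (1 / t)) \<le> (A + 1) * (t * ln (1 / t))" by (intro mult_right_mono) auto
    then have "A * (t * ln (1 / t)) \<le> 8" using elim by linarith
    with elim \<open>0 < t * ln (1 / t)\<close> show ?case by (simp add: abs_mult mult.assoc)
  qed
qed

lemma implied_vol_expansion_bigo:
  fixes \<sigma> I :: "real \<Rightarrow> real"
  assumes \<theta>: "\<theta> \<noteq> 0" and d0: "0 < d0"
    and evQ: "\<forall>\<^sub>F t in at_right 0. 0 < \<sigma> t \<and> bs_time_value (\<theta> * sqrt (t * ln (1 / t))) (\<sigma> t * sqrt t) = I t"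
    and evI: "\<forall>\<^sub>F t in at_right 0. 0 < I t"
    and evD: "\<forall>\<^sub>F t in at_right 0. d0 \<le> 2 * J_fun t (I t) - 1 \<and> 2 * J_fun t (I t) - 1 \<le> d1"
  shows "(\<lambda>t. \<sigma> t - vol_expansion \<theta> (ln (1 / t)) (2 * J_fun t (I t) - 1)) \<in> O[at_right 0](\<lambda>t. 1 / ln (1 / t) ^ 2)"
proof -
  define c where "c = \<theta>^2 * sqrt (2 * pi)"
  define S1 where "S1 = \<bar>\<theta>\<bar> * sqrt (2 / d0)"
  define s0 where "s0 = min 1 (\<bar>\<theta>\<bar> / sqrt (d1 + 2 * (\<bar>ln c\<bar> + 2)))"
  define R where "R t = \<theta> * sqrt (t * ln (1 / t)) / 2 + ln (I t / bs_tail (\<theta> * sqrt (t * ln (1 / t))) (\<sigma> t * sqrt t))" for t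
  define T where "T = max 8 (max (6 * S1^2 / \<theta>^2) (4 * (\<bar>ln (S1^3 / c)\<bar> + 3) / d0 + 1))"
  have "\<forall>\<^sub>F t in at_right 0. s0 \<le> \<sigma> t \<and> \<sigma> t \<le> S1 \<and> \<bar>R t\<bar> \<le> (2 + 6 * S1^2 / \<theta>^2) / ln (1 / t)
      \<and> \<theta>^2 / \<sigma> t ^ 2 = (2 * J_fun t (I t) - 1) + 2 / ln (1 / t) * (ln (\<sigma> t ^ 3 / c) + R t)
      \<and> 1 \<le> ln (1 / t)"
    using eventually_small_time[where A = "S1^2" and T = T and \<theta> = \<theta>, OF zero_le_power2] evQ evI evD
  proof eventually_elim
    case (elim t)
    have "8 \<le> ln (1 / t)" "6 * S1^2 \<le> \<theta>^2 * ln (1 / t)" "4 * (\<bar>ln (S1^3 / c)\<bar> + 3) < d0 * ln (1 / t)"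
      using elim(1) \<theta> d0 by (auto simp: T_def field_simps)
    with elim implied_vol_fixed_point_bounds[of t \<theta> d0 "\<sigma> t" "I t" d1] \<theta> d0 show ?case
      by (simp add: s0_def S1_def c_def R_def)
  qed
  then have bounds: "\<forall>\<^sub>F t in at_right 0. s0 \<le> \<sigma> t \<and> \<sigma> t \<le> S1"
    "\<forall>\<^sub>F t in at_right 0. norm (R t) \<le> (2 + 6 * S1^2 / \<theta>^2) * norm (1 / ln (1 / t))"
    "\<forall>\<^sub>F t in at_right 0. \<theta>^2 / \<sigma> t ^ 2
      = (2 * J_fun t (I t) - 1) + 2 / ln (1 / t) * (ln (\<sigma> t ^ 3 / (\<theta>^2 * sqrt (2 * pi))) + R t)"
    by (auto simp: c_def elim: eventually_mono)
  have "d0 \<le> d1" using eventually_happens[OF evD] by auto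
  then have "0 < s0" using \<theta> d0 by (simp add: s0_def)
  from fixed_point_expansion[OF \<theta> this d0 ln_inverse_at_right_0 bounds(1) evD bigoI[OF bounds(2)] bounds(3)]
  show ?thesis .
qed

lemma tendsto_diff_uniformly_continuous_on:
  fixes f :: "real \<Rightarrow> real"
  assumes f: "uniformly_continuous_on A f" and XY: "\<forall>\<^sub>F x in F. X x \<in> A \<and> Y x \<in> A"
    and lim: "((\<lambda>x. X x - Y x) \<longlongrightarrow> 0) F"
  shows "((\<lambda>x. f (X x) - f (Y x)) \<longlongrightarrow> 0) F"
proof (rule tendstoI)
  fix e :: real assume "e > 0"
  then obtain \<delta> where \<delta>: "\<delta> > 0" "\<And>x x'. x \<in> A \<Longrightarrow> x' \<in> A \<Longrightarrow> dist x' x < \<delta> \<Longrightarrow> dist (f x') (f x) < e"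
    using f unfolding uniformly_continuous_on_def by metis
  show "\<forall>\<^sub>F x in F. dist (f (X x) - f (Y x)) 0 < e"
    using XY order_tendstoD(2)[OF tendsto_rabs_zero[OF lim] \<delta>(1)]
    by eventually_elim (use \<delta>(2) in \<open>force simp: dist_real_def\<close>)
qed

lemma vol_expansion_perturbation:
  fixes F :: "'a filter" and \<tau> D D' :: "'a \<Rightarrow> real"
  assumes \<theta>: "\<theta> \<noteq> 0" and d0: "0 < d0"
    and \<tau>: "filterlim \<tau> at_top F"
    and D: "\<forall>\<^sub>F x in F. d0 \<le> D x \<and> D x \<le> d1"
    and D': "((\<lambda>x. \<tau> x * (D' x - D x)) \<longlongrightarrow> 0) F"
  shows "(\<lambda>x. vol_expansion \<theta> (\<tau> x) (D x) - vol_expansion \<theta> (\<tau> x) (D' x)) \<in> o[F](\<lambda>x. 1 / \<tau> x)"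
proof -
  define m where "m = d0 / 2"
  define h where "h D = \<bar>\<theta>\<bar> * ln (D powr (3/2) * sqrt (2 * pi) / \<bar>\<theta>\<bar>) / D powr (3/2)" for D
  have \<tau>1: "\<forall>\<^sub>F x in F. 1 \<le> \<tau> x" using \<tau>[unfolded filterlim_at_top, rule_format, of 1] .
  have "((\<lambda>x. 1 / \<tau> x * (\<tau> x * (D' x - D x))) \<longlongrightarrow> 0 * 0) F"
    by (intro tendsto_mult D' tendsto_divide_0[OF tendsto_const] filterlim_at_top_imp_at_infinity \<tau>)
  then have "((\<lambda>x. 1 / \<tau> x * (\<tau> x * (D' x - D x))) \<longlongrightarrow> 0) F" by simp
  then have "((\<lambda>x. D' x - D x) \<longlongrightarrow> 0) F"
    by (rule Lim_transform_eventually) (use \<tau>1 in \<open>eventually_elim, simp\<close>)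
  from order_tendstoD(1)[OF this, of "- m"] order_tendstoD(2)[OF this, of "min 1 m"]
  have "\<forall>\<^sub>F x in F. - m < D' x - D x \<and> D' x - D x < min 1 m" using d0 by (simp add: m_def eventually_conj_iff)
  then have DD': "\<forall>\<^sub>F x in F. D x \<in> {m..d1+1} \<and> D' x \<in> {m..d1+1}"
    using D by eventually_elim (use d0 in \<open>auto simp: m_def\<close>)
  define C where "C = \<bar>\<theta>\<bar> / (2 * m * sqrt m)"
  have "\<forall>\<^sub>F x in F. norm (\<tau> x * (\<bar>\<theta>\<bar> / sqrt (D x) - \<bar>\<theta>\<bar> / sqrt (D' x))) \<le> C * \<bar>\<tau> x * (D' x - D x)\<bar>"
    using DD' \<tau>1
  proof eventually_elim
    case (elim x)
    have "\<bar>1 / sqrt (D x) - 1 / sqrt (D' x)\<bar> \<le> \<bar>D x - D' x\<bar> / (2 * m * sqrt m)"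
      using elim d0 by (intro inverse_sqrt_lipschitz) (auto simp: m_def)
    then have "\<bar>\<theta>\<bar> * \<tau> x * \<bar>1 / sqrt (D x) - 1 / sqrt (D' x)\<bar> \<le> \<bar>\<theta>\<bar> * \<tau> x * (\<bar>D x - D' x\<bar> / (2 * m * sqrt m))"
      using elim by (intro mult_left_mono) auto
    moreover have "\<bar>\<theta>\<bar> / sqrt (D x) - \<bar>\<theta>\<bar> / sqrt (D' x) = \<bar>\<theta>\<bar> * (1 / sqrt (D x) - 1 / sqrt (D' x))"
      by (simp add: right_diff_distrib)
    ultimately show ?case using elim by (simp add: C_def abs_mult abs_minus_commute mult_ac)
  qed
  then have first: "((\<lambda>x. \<tau> x * (\<bar>\<theta>\<bar> / sqrt (D x) - \<bar>\<theta>\<bar> / sqrt (D' x))) \<longlongrightarrow> 0) F"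
    by (rule Lim_null_comparison) (rule tendsto_mult_right_zero[OF tendsto_rabs_zero[OF D']])
  have "uniformly_continuous_on {m..d1+1} h"
    using d0 \<theta> by (intro compact_uniformly_continuous) (auto simp: h_def m_def intro!: continuous_intros)
  from tendsto_diff_uniformly_continuous_on[OF this DD'] \<open>((\<lambda>x. D' x - D x) \<longlongrightarrow> 0) F\<close>
  have second: "((\<lambda>x. h (D x) - h (D' x)) \<longlongrightarrow> 0) F"
    using tendsto_minus[of "\<lambda>x. D' x - D x" 0 F] by simp
  have "((\<lambda>x. (vol_expansion \<theta> (\<tau> x) (D x) - vol_expansion \<theta> (\<tau> x) (D' x)) / (1 / \<tau> x)) \<longlongrightarrow> 0) F"
  proof (rule Lim_transform_eventually)
    show "((\<lambda>x. \<tau> x * (\<bar>\<theta>\<bar> / sqrt (D x) - \<bar>\<theta>\<bar> / sqrt (D' x)) + (h (D x) - h (D' x))) \<longlongrightarrow> 0) F"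
      using tendsto_add[OF first second] by simp
    show "\<forall>\<^sub>F x in F. \<tau> x * (\<bar>\<theta>\<bar> / sqrt (D x) - \<bar>\<theta>\<bar> / sqrt (D' x)) + (h (D x) - h (D' x))
        = (vol_expansion \<theta> (\<tau> x) (D x) - vol_expansion \<theta> (\<tau> x) (D' x)) / (1 / \<tau> x)"
      using \<tau>1 by eventually_elim (simp add: vol_expansion_def h_def field_simps)
  qed
  moreover have "\<forall>\<^sub>F x in F. 1 / \<tau> x \<noteq> 0" using \<tau>1 by eventually_elim simp
  ultimately show ?thesis by (rule smalloI_tendsto)
qed

lemma ln_inverse_mult_J_fun_diff_tendsto_0:
  assumes asym: "I \<sim>[at_right 0] I'" and I: "\<forall>\<^sub>F t in at_right 0. 0 < I t"
  shows "((\<lambda>t. ln (1 / t) * (J_fun t (I' t) - J_fun t (I t))) \<longlongrightarrow> 0) (at_right 0)"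
proof -
  have "((\<lambda>t. I t / I' t) \<longlongrightarrow> 1) (at_right 0)"
    using asymp_equivD[OF asym] by (rule Lim_transform_eventually) (use I in \<open>eventually_elim, simp\<close>)
  then have lim: "((\<lambda>t. ln (I t / I' t)) \<longlongrightarrow> 0) (at_right 0)"
    using tendsto_ln[of _ 1] by fastforce
  have "\<forall>\<^sub>F t in at_right 0. 0 < I t / I' t"
    using order_tendstoD(1)[OF \<open>((\<lambda>t. I t / I' t) \<longlongrightarrow> 1) (at_right 0)\<close>, of 0] by simp
  moreover have "\<forall>\<^sub>F t in at_right (0::real). 0 < t \<and> t < 1"
    by (auto simp: eventually_at_right_field intro!: exI[of _ 1])
  ultimately have "\<forall>\<^sub>F t in at_right 0. ln (I t / I' t) = ln (1 / t) * (J_fun t (I' t) - J_fun t (I t))"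
    using I by eventually_elim (auto simp: J_fun_def ln_div zero_less_divide_iff field_simps)
  then show ?thesis using lim by (rule Lim_transform_eventually[rotated])
qed

lemma eventually_gt_if_Liminf_gt:
  assumes "ereal a < Liminf F (\<lambda>x. ereal (f x))"
  shows "\<exists>c>a. \<forall>\<^sub>F x in F. c < f x"
proof -
  obtain z where z: "ereal a < z" "z < Liminf F (\<lambda>x. ereal (f x))" using dense[OF assms] by blast
  then obtain c where "z = ereal c" by (cases z) auto
  then show ?thesis using z less_LiminfD[OF z(2)] by (intro exI[of _ c]) auto
qed

lemma eventually_less_if_Limsup_less_infinity:
  assumes "Limsup F (\<lambda>x. ereal (f x)) < \<infinity>"
  shows "\<exists>c. \<forall>\<^sub>F x in F. f x < c"
proof -
  obtain w where w: "Limsup F (\<lambda>x. ereal (f x)) < w" "w < \<infinity>" using dense[OF assms] by blast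
  then obtain c where "w = ereal c" by (cases w) auto
  then show ?thesis using Limsup_lessD[OF w(1)] by (intro exI[of _ c]) auto
qed

lemma implied_vol_martingale_time_value:
  assumes mart: "martingale M F S" and pos: "\<And>t \<omega>. t \<ge> 0 \<Longrightarrow> \<omega> \<in> space M \<Longrightarrow> S t \<omega> > 0"
    and init: "\<And>\<omega>. \<omega> \<in> space M \<Longrightarrow> S 0 \<omega> = 1" and t: "0 < t" and k: "k \<noteq> 0"
    and price: "0 < (if k > 0 then call_price M S t k else put_price M S t k)"
  shows "0 < implied_vol t k (call_price M S t k)"
    and "bs_time_value k (implied_vol t k (call_price M S t k) * sqrt t)
      = (if k > 0 then call_price M S t k else put_price M S t k)"
proof -
  note prices = martingale_call_put_prices[OF mart pos init less_imp_le[OF t], of k]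
  have "call_price M S t k - max (1 - exp k) 0 = (if k > 0 then call_price M S t k else put_price M S t k)"
    using prices(1) k by auto
  then show "0 < implied_vol t k (call_price M S t k)"
    and "bs_time_value k (implied_vol t k (call_price M S t k) * sqrt t)
      = (if k > 0 then call_price M S t k else put_price M S t k)"
    using implied_vol_bs_time_value[OF t k, of "call_price M S t k"] prices(3) price t by auto
qed

lemma implied_vol_eventually_time_value:
  fixes M :: "'a measure" and F :: "real \<Rightarrow> 'a measure" and S :: "real \<Rightarrow> 'a \<Rightarrow> real" and \<theta> c :: real
  defines "k \<equiv> \<lambda>t. \<theta> * sqrt (t * ln (1 / t))"
  defines "I \<equiv> \<lambda>t. (if \<theta> > 0 then call_price M S t (k t) else 0) + (if \<theta> < 0 then put_price M S t (k t) else 0)"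
  assumes mart: "martingale M F S" and pos: "\<And>t \<omega>. t \<ge> 0 \<Longrightarrow> \<omega> \<in> space M \<Longrightarrow> S t \<omega> > 0"
    and init: "\<And>\<omega>. \<omega> \<in> space M \<Longrightarrow> S 0 \<omega> = 1" and \<theta>: "\<theta> \<noteq> 0" and c: "0 < c"
    and ratio: "\<forall>\<^sub>F t in at_right 0. c < ln (I t) / ln t"
  shows "\<forall>\<^sub>F t in at_right 0. 0 < I t \<and> 0 < implied_vol t (k t) (call_price M S t (k t))
    \<and> bs_time_value (k t) (implied_vol t (k t) (call_price M S t (k t)) * sqrt t) = I t"
proof -
  have "\<forall>\<^sub>F t in at_right (0::real). 0 < t \<and> t < 1"
    by (auto simp: eventually_at_right_field intro!: exI[of _ 1])
  with ratio show ?thesis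
  proof eventually_elim
    case (elim t)
    then have t: "0 < t" "t < 1" by auto
    have "0 < t * ln (1 / t)" using t by simp
    then have "0 < sqrt (t * ln (1 / t))" by simp
    then have sign_k: "0 < k t \<longleftrightarrow> 0 < \<theta>" "k t \<noteq> 0"
      unfolding k_def using \<theta> zero_less_mult_pos2[of \<theta>] mult_pos_pos[of \<theta>]
      by (blast, metis less_irrefl mult_eq_0_iff)
    have "0 \<le> I t"
      using martingale_call_put_prices(2,4)[OF mart pos init less_imp_le[OF t(1)], of "k t"] by (simp add: I_def)
    \<comment> \<open>Since ln 0 = 0, the lower bound on the ratio rules out I t = 0.\<close>
    moreover have "I t \<noteq> 0" using elim c by auto
    ultimately have "0 < I t" by simp
    moreover have "I t = (if k t > 0 then call_price M S t (k t) else put_price M S t (k t))"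
      using sign_k \<theta> by (auto simp: I_def)
    ultimately show ?case
      using implied_vol_martingale_time_value[OF mart pos init t(1) sign_k(2)] by simp
  qed
qed
theorem theorem3p1:
  fixes M :: "'a measure" and F :: "real \<Rightarrow> 'a measure" and S :: "real \<Rightarrow> 'a \<Rightarrow> real"
    and \<theta> :: real and Chat Phat :: "real \<Rightarrow> real"
  defines "k \<equiv> (\<lambda>t. \<theta> * sqrt (t * ln (1 / t)))"
  defines "I \<equiv> (\<lambda>t. (if \<theta> > 0 then call_price M S t (k t) else 0)
                     + (if \<theta> < 0 then put_price M S t (k t) else 0))"
  defines "Ihat \<equiv> (\<lambda>t. (if \<theta> > 0 then Chat t else 0) + (if \<theta> < 0 then Phat t else 0))"
  defines "L \<equiv> (\<lambda>t. J_fun t (I t))"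
  defines "Lhat \<equiv> (\<lambda>t. J_fun t (Ihat t))"
  defines "\<sigma> \<equiv> (\<lambda>t. implied_vol t (k t) (call_price M S t (k t)))"
  assumes mart: "martingale M F S"
    and pos: "\<And>t \<omega>. t \<ge> 0 \<Longrightarrow> \<omega> \<in> space M \<Longrightarrow> S t \<omega> > 0"
    and init: "\<And>\<omega>. \<omega> \<in> space M \<Longrightarrow> S 0 \<omega> = 1"
    and theta: "\<theta> \<noteq> 0"
    and Chat: "(\<lambda>t. call_price M S t (k t)) \<sim>[at_right 0] Chat"
    and Phat: "(\<lambda>t. put_price M S t (k t)) \<sim>[at_right 0] Phat"
    and liminf: "Liminf (at_right 0) (\<lambda>t. ereal (ln (I t) / ln t)) > ereal (1/2)"
    and limsup: "Limsup (at_right 0) (\<lambda>t. ereal (ln (I t) / ln t)) < \<infinity>"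
  shows "((\<lambda>t. \<sigma> t - (\<bar>\<theta>\<bar> / sqrt (2 * L t - 1)
            + \<bar>\<theta>\<bar> * ln ((2 * L t - 1) powr (3/2) * sqrt (2 * pi) / \<bar>\<theta>\<bar>)
                / (2 * L t - 1) powr (3/2) * (1 / ln (1 / t))))
          \<in> O[at_right 0](\<lambda>t. 1 / (ln (1 / t)) ^ 2))
      \<and> ((\<lambda>t. \<sigma> t - (\<bar>\<theta>\<bar> / sqrt (2 * Lhat t - 1)
            + \<bar>\<theta>\<bar> * ln ((2 * Lhat t - 1) powr (3/2) * sqrt (2 * pi) / \<bar>\<theta>\<bar>)
                / (2 * Lhat t - 1) powr (3/2) * (1 / ln (1 / t))))
          \<in> o[at_right 0](\<lambda>t. 1 / ln (1 / t)))"
proof -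
  obtain c1 where c1: "1/2 < c1" "\<forall>\<^sub>F t in at_right 0. c1 < ln (I t) / ln t"
    using eventually_gt_if_Liminf_gt[OF liminf] by blast
  obtain c2 where c2: "\<forall>\<^sub>F t in at_right 0. ln (I t) / ln t < c2"
    using eventually_less_if_Limsup_less_infinity[OF limsup] by blast
  have d0: "0 < c1 - 1/2" using c1(1) by simp
  have ev: "\<forall>\<^sub>F t in at_right 0. 0 < I t \<and> 0 < \<sigma> t \<and> bs_time_value (\<theta> * sqrt (t * ln (1 / t))) (\<sigma> t * sqrt t) = I t"
    using implied_vol_eventually_time_value[OF mart pos init theta _ c1(2)[unfolded I_def k_def]] c1(1)
    unfolding I_def k_def \<sigma>_def by simp
  have evD: "\<forall>\<^sub>F t in at_right 0. c1 - 1/2 \<le> 2 * L t - 1 \<and> 2 * L t - 1 \<le> 2 * c2 - 1"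
    unfolding L_def by (rule J_fun_bounds[OF c1 c2])
  have big: "(\<lambda>t. \<sigma> t - vol_expansion \<theta> (ln (1 / t)) (2 * L t - 1)) \<in> O[at_right 0](\<lambda>t. 1 / ln (1 / t) ^ 2)"
    using ev unfolding L_def
    by (intro implied_vol_expansion_bigo[OF theta d0 _ _ evD[unfolded L_def]]) (auto elim: eventually_mono)
  have "I \<sim>[at_right 0] Ihat" using Chat Phat theta by (cases "\<theta> > 0") (auto simp: I_def Ihat_def)
  from tendsto_mult_right_zero[OF ln_inverse_mult_J_fun_diff_tendsto_0[OF this], of 2] ev
  have "((\<lambda>t. ln (1 / t) * ((2 * Lhat t - 1) - (2 * L t - 1))) \<longlongrightarrow> 0) (at_right 0)"
    by (simp add: L_def Lhat_def eventually_conj_iff algebra_simps)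
  from vol_expansion_perturbation[OF theta d0 ln_inverse_at_right_0 evD this]
  have pert: "(\<lambda>t. vol_expansion \<theta> (ln (1 / t)) (2 * L t - 1) - vol_expansion \<theta> (ln (1 / t)) (2 * Lhat t - 1))
      \<in> o[at_right 0](\<lambda>t. 1 / ln (1 / t))" .
  have "(\<lambda>t. \<sigma> t - vol_expansion \<theta> (ln (1 / t)) (2 * L t - 1)) \<in> o[at_right 0](\<lambda>t. 1 / ln (1 / t))"
    by (rule landau_o.big_small_trans[OF big]) real_asymp
  from sum_in_smallo(1)[OF this pert]
  have "(\<lambda>t. \<sigma> t - vol_expansion \<theta> (ln (1 / t)) (2 * Lhat t - 1)) \<in> o[at_right 0](\<lambda>t. 1 / ln (1 / t))"
    by simp
  with big show ?thesis unfolding vol_expansion_def by blast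
qed

end
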